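(* Let $W>0$. For $s=1,2$ let $\mathscr N^{(s)}\in L_2(0,\pi)$, $\omega^{(s)}\in\mathbb C$ with $\|\mathscr N^{(s)}\|_{L_2}+|\omega^{(s)}|\le W$, and $\Delta^{(s)}(\rho)=-\rho\sin\rho\pi+\omega^{(s)}\cos\rho\pi+\int_0^\pi\mathscr N^{(s)}(t)\cos\rho t\,dt$. Then there exist $\mathscr M^{(s)}\in L_2(0,\pi)$ such that $$\Delta^{(s)}\Big(\sqrt{\rho^2+\tfrac2\pi\omega^{(s)}}\Big)=-\rho\sin\rho\pi+\int_0^\pi\mathscr M^{(s)}(t)\cos\rho t\,dt,$$ and, with a constant $C=C(W)$, $\|\mathscr M^{(s)}\|_{L_2}\le C$ for $s=1,2$ and $$\|\mathscr M^{(1)}-\mathscr M^{(2)}\|_{L_2}\le C\big(\|\mathscr N^{(1)}-\mathscr N^{(2)}\|_{L_2}+|\omega^{(1)}-\omega^{(2)}|\big).$$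
   Context: Since $\Delta^{(s)}$ is even in $\rho$, $\Delta^{(s)}(\sqrt{\cdot})$ does not depend on the choice of square root branch. *)

theory Defs
  imports "HOL-Analysis.Analysis"
begin

definition L2_0pi :: "(real \<Rightarrow> complex) \<Rightarrow> bool" where
  "L2_0pi f \<longleftrightarrow> set_borel_measurable lborel {0..pi} f \<and>
     set_integrable lborel {0..pi} (\<lambda>t. (cmod (f t))\<^sup>2)"

definition L2_norm_0pi :: "(real \<Rightarrow> complex) \<Rightarrow> real" where
  "L2_norm_0pi f = sqrt (LINT t:{0..pi}|lborel. (cmod (f t))\<^sup>2)"

definition Delta :: "(real \<Rightarrow> complex) \<Rightarrow> complex \<Rightarrow> complex \<Rightarrow> complex" where
  "Delta N \<omega> \<rho> = - \<rho> * sin (\<rho> * pi) + \<omega> * cos (\<rho> * pi)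
      + (LINT t:{0..pi}|lborel. N t * cos (\<rho> * of_real t))"

end

theory Submission
  imports Defs
begin

text \<open>Write \<open>c = 2 \<omega> / \<pi>\<close> and \<open>\<mu>\<^sup>2 = \<rho>\<^sup>2 + c\<close>. Since \<open>cos (\<mu> t)\<close> and \<open>t \<mu> sin (\<mu> t)\<close> are entire
  functions of \<open>\<mu>\<^sup>2\<close>, re-expanding their power series around \<open>\<rho>\<^sup>2\<close> in powers of \<open>c\<close> gives the
  transformation-operator identities
  \<open>cos (\<mu> t) = cos (\<rho> t) + \<integral>\<^sub>0\<^sup>t K(t, s) cos (\<rho> s) ds\<close> and
  \<open>\<pi> \<mu> sin (\<mu> \<pi>) = \<pi> \<rho> sin (\<rho> \<pi>) + c \<pi>\<^sup>2/2 cos (\<rho> \<pi>) + \<integral>\<^sub>0\<^sup>\<pi> G(s) cos (\<rho> s) ds\<close>,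
  with Bessel-type kernels \<open>K\<close> and \<open>G\<close> that are power series in \<open>c\<close>. Inserting them into
  \<open>\<Delta>(\<mu>)\<close> and exchanging the order of integration in \<open>\<integral>\<^sub>0\<^sup>\<pi> N(t) cos (\<mu> t) dt\<close> yields
  \<open>M = - G / \<pi> + \<omega> K(\<pi>, \<cdot>) + N + \<integral>\<^sub>s\<^sup>\<pi> N(t) K(t, s) dt\<close>. For \<open>|c| \<le> 2 W / \<pi>\<close> the kernels are bounded
  and Lipschitz in \<open>c\<close>, so \<open>|M\<^sub>1 - M\<^sub>2| \<le> |N\<^sub>1 - N\<^sub>2| + C (\<parallel>N\<^sub>1 - N\<^sub>2\<parallel> + |\<omega>\<^sub>1 - \<omega>\<^sub>2|)\<close> pointwise,
  which integrates to the \<open>L\<^sub>2\<close> estimates; the bound on \<open>M\<close> itself is the case \<open>N\<^sub>2 = 0\<close>, \<open>\<omega>\<^sub>2 = 0\<close>.\<close>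

section \<open>Re-expanding entire power series\<close>

lemma binomial_term_le_power:
  fixes y :: real
  assumes "0 \<le> y" "k \<le> n"
  shows "real (n choose k) * y ^ (n - k) \<le> (1 + y) ^ n"
proof -
  have "real (n choose (n - k)) * y ^ (n - k) * 1 ^ (n - (n - k)) \<le> (\<Sum>i\<le>n. real (n choose i) * y ^ i * 1 ^ (n - i))"
    by (rule member_le_sum) (use assms in auto)
  also have "\<dots> = (y + 1) ^ n"
    by (rule binomial_ring[symmetric])
  finally show ?thesis
    using assms by (simp add: binomial_symmetric[of k n] add.commute)
qed

definition taylor_coeff :: "(nat \<Rightarrow> complex) \<Rightarrow> complex \<Rightarrow> nat \<Rightarrow> complex" where
  "taylor_coeff a y k = (\<Sum>m. a (m + k) * of_nat ((m + k) choose k) * y ^ m)"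

lemma summable_taylor_coeff_terms:
  fixes a :: "nat \<Rightarrow> complex"
  assumes a: "\<And>r. summable (\<lambda>n. norm (a n) * r ^ n)"
  shows "summable (\<lambda>m. norm (a (m + k) * of_nat ((m + k) choose k) * y ^ m))"
proof (rule summable_comparison_test')
  show "summable (\<lambda>m. norm (a (m + k)) * (1 + norm y) ^ (m + k))"
    using summable_ignore_initial_segment[OF a[of "1 + norm y"], of k] by simp
  show "norm (norm (a (m + k) * of_nat ((m + k) choose k) * y ^ m)) \<le> norm (a (m + k)) * (1 + norm y) ^ (m + k)" for m
    using binomial_term_le_power[of "norm y" k "m + k"]
    by (simp add: norm_mult norm_power mult.assoc mult_left_mono)
qed

text \<open>Absolute convergence of the double series \<open>\<Sum>n \<Sum>k\<le>n\<close> lets it be summed along the other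
  diagonal.\<close>

lemma sums_taylor_coeff:
  fixes a :: "nat \<Rightarrow> complex"
  assumes a: "\<And>r. summable (\<lambda>n. norm (a n) * r ^ n)"
  shows "(\<lambda>k. c ^ k * taylor_coeff a y k) sums (\<Sum>n. a n * (y + c) ^ n)"
proof -
  define S where "S = Sigma (UNIV :: nat set) (\<lambda>n. {..n})"
  define h where "h = (\<lambda>(n, k). a n * of_nat (n choose k) * c ^ k * y ^ (n - k))"
  have "(\<lambda>x. norm (h x)) summable_on S"
    unfolding S_def
  proof (rule Infinite_Sum.abs_summable_on_Sigma_iff[THEN iffD2], intro conjI ballI)
    have "(\<Sum>k\<le>n. norm (h (n, k))) = norm (a n) * (norm c + norm y) ^ n" for n
      by (simp add: h_def binomial_ring sum_distrib_left norm_mult norm_power mult_ac)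
    then show "(\<lambda>n. norm (\<Sum>\<^sub>\<infinity>k\<in>{..n}. norm (h (n, k)))) summable_on UNIV"
      using summable_nonneg_imp_summable_on[OF a[of "norm c + norm y"]] by simp
  qed auto
  then have "h summable_on S"
    by (rule abs_summable_summable)
  define T where "T = infsum h S"
  have hT: "(h has_sum T) S"
    using \<open>h summable_on S\<close> by (simp add: T_def)
  have "((\<lambda>n. a n * (y + c) ^ n) has_sum T) UNIV"
  proof (rule has_sum_SigmaD[OF hT[unfolded S_def]])
    have "a n * (y + c) ^ n = (\<Sum>k\<le>n. h (n, k))" for n
      by (simp add: h_def binomial_ring[of c y] add.commute sum_distrib_left mult_ac)
    then show "((\<lambda>k. h (n, k)) has_sum a n * (y + c) ^ n) {..n}" for n
      by simp
  qed
  then have sum_h: "(\<Sum>n. a n * (y + c) ^ n) = T"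
    by (metis has_sum_imp_sums sums_unique)
  define g where "g = (\<lambda>(k, m). a (m + k) * of_nat ((m + k) choose k) * c ^ k * y ^ m)"
  have "(g has_sum T) (UNIV \<times> UNIV)"
    using hT
    by (subst has_sum_reindex_bij_witness[where i="\<lambda>(n, k). (k, n - k)" and j="\<lambda>(k, m). (m + k, k)"])
       (auto simp: S_def g_def h_def)
  moreover have "((\<lambda>m. g (k, m)) has_sum c ^ k * taylor_coeff a y k) UNIV" for k
  proof (rule norm_summable_imp_has_sum)
    note terms = summable_taylor_coeff_terms[OF a, of k y]
    show "summable (\<lambda>m. norm (g (k, m)))"
      using summable_mult[OF terms, of "norm c ^ k"] by (simp add: g_def norm_mult norm_power mult_ac)
    show "(\<lambda>m. g (k, m)) sums (c ^ k * taylor_coeff a y k)"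
      using sums_mult[OF summable_sums[OF summable_norm_cancel[OF terms]], of "c ^ k"]
      by (simp add: g_def taylor_coeff_def mult_ac)
  qed
  ultimately have "((\<lambda>k. c ^ k * taylor_coeff a y k) has_sum T) UNIV"
    by (rule has_sum_SigmaD)
  then show ?thesis
    unfolding sum_h by (rule has_sum_imp_sums)
qed

definition cos_sqrt_coeff :: "nat \<Rightarrow> real" where
  "cos_sqrt_coeff n = (-1) ^ n / fact (2 * n)"

lemma cos_sqrt_coeff_Suc:
  "cos_sqrt_coeff (Suc n) = - cos_sqrt_coeff n / (2 * n + 1) / (2 * n + 2)"
proof -
  have "fact (2 * Suc n) = (2 * n + 2) * (2 * n + 1) * (fact (2 * n) :: real)"
    by (simp add: fact_reduce algebra_simps)
  then show ?thesis
    by (simp add: cos_sqrt_coeff_def field_simps)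
qed

lemma abs_cos_sqrt_coeff_le: "\<bar>cos_sqrt_coeff n\<bar> \<le> 1 / fact n"
proof -
  have "fact n \<le> (fact (2 * n) :: real)"
    by (rule fact_mono) auto
  then show ?thesis
    by (simp add: cos_sqrt_coeff_def abs_mult frac_le)
qed

lemma sin_coeff_conv_cos_sqrt_coeff:
  "(-1) ^ n / fact (2 * n + 1) = - 2 * real (Suc n) * cos_sqrt_coeff (Suc n)"
proof -
  have "fact (2 * Suc n) = (2 * real n + 2) * (fact (2 * n + 1) :: real)"
    by (simp add: fact_reduce algebra_simps)
  then show ?thesis
    by (simp del: fact_Suc add: cos_sqrt_coeff_def divide_simps; simp add: algebra_simps)
qed

lemma abs_xsin_sqrt_coeff_le: "\<bar>- 2 * real n * cos_sqrt_coeff n\<bar> \<le> 1 / fact n"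
proof (cases n)
  case (Suc k)
  have "- 2 * real n * cos_sqrt_coeff n = (-1) ^ k / fact (2 * k + 1)"
    by (simp only: Suc sin_coeff_conv_cos_sqrt_coeff)
  then have "\<bar>- 2 * real n * cos_sqrt_coeff n\<bar> = 1 / fact (2 * k + 1)"
    by (simp del: fact_Suc add: abs_divide)
  also have "\<dots> \<le> 1 / fact n"
    using Suc by (intro frac_le fact_mono) auto
  finally show ?thesis .
qed simp

lemma cos_sqrt_series:
  fixes z :: complex
  shows "(\<lambda>n. of_real (cos_sqrt_coeff n * t ^ (2 * n)) * (z ^ 2) ^ n) sums cos (z * of_real t)"
  using cos_series[of "z * of_real t"]
  by (simp add: cos_sqrt_coeff_def scaleR_conv_of_real power_mult_distrib power_mult[symmetric] mult_ac)

text \<open>The coefficients come from \<open>t \<mu> sin (t \<mu>) = - t \<partial>\<^sub>t cos (t \<mu>)\<close>.\<close>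

lemma xsin_sqrt_series:
  fixes z :: complex
  shows "(\<lambda>n. of_real (- 2 * real n * cos_sqrt_coeff n * t ^ (2 * n)) * (z ^ 2) ^ n)
           sums (of_real t * z * sin (z * of_real t))"
proof -
  have shifted_term: "(z * of_real t) * (((-1) ^ n / fact (2 * n + 1)) *\<^sub>R (z * of_real t) ^ (2 * n + 1))
      = of_real (- 2 * real (Suc n) * cos_sqrt_coeff (Suc n) * t ^ (2 * Suc n)) * (z ^ 2) ^ Suc n" for n
    unfolding sin_coeff_conv_cos_sqrt_coeff[symmetric] scaleR_conv_of_real
    by (simp only: of_real_mult of_real_power power_mult_distrib power_mult[symmetric] power_Suc)
       (simp add: mult_ac power2_eq_square)
  have "(\<lambda>n. (z * of_real t) * (((-1) ^ n / fact (2 * n + 1)) *\<^sub>R (z * of_real t) ^ (2 * n + 1)))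
          sums ((z * of_real t) * sin (z * of_real t))"
    by (rule sums_mult[OF sin_series])
  then show ?thesis
    unfolding shifted_term by (subst (asm) sums_Suc_iff) (simp add: mult_ac)
qed

lemma summable_norm_scaled_coeffs:
  fixes b :: "nat \<Rightarrow> real"
  assumes "\<And>n. \<bar>b n\<bar> \<le> 1 / fact n"
  shows "summable (\<lambda>n. norm (complex_of_real (b n * T ^ (2 * n))) * r ^ n)"
proof (rule summable_comparison_test'[OF summable_exp[of "T^2 * \<bar>r\<bar>"]])
  fix n
  have "norm (norm (complex_of_real (b n * T ^ (2 * n))) * r ^ n) = \<bar>b n\<bar> * (T^2 * \<bar>r\<bar>) ^ n"
    unfolding norm_of_real by (simp add: abs_mult power_abs power_mult power_mult_distrib)
  also have "\<dots> \<le> inverse (fact n) * (T^2 * \<bar>r\<bar>) ^ n"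
    using assms[of n] by (intro mult_right_mono) (auto simp: divide_inverse)
  finally show "norm (norm (complex_of_real (b n * T ^ (2 * n))) * r ^ n) \<le> inverse (fact n) * (T^2 * \<bar>r\<bar>) ^ n" .
qed

definition bessel_coeff :: "nat \<Rightarrow> real" where
  "bessel_coeff j = - (1 / 2) * (- 1 / 4) ^ j / (fact (j + 1) * fact j)"

lemma bessel_coeff_0: "bessel_coeff 0 = - 1 / 2"
  by (simp add: bessel_coeff_def)

lemma bessel_coeff_Suc:
  "bessel_coeff (Suc j) = - bessel_coeff j / 4 / (j + 1) / (j + 2)"
proof -
  have "fact (Suc j + 1) = (j + 2) * (j + 1) * (fact j :: real)" "fact (j + 1) = (j + 1) * (fact j :: real)"
    by (simp_all add: fact_reduce algebra_simps)
  then show ?thesis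
    by (simp add: bessel_coeff_def field_simps)
qed

lemma abs_bessel_coeff_le: "\<bar>bessel_coeff j\<bar> * (real j + 1) * (2 * real j + 1) \<le> 1 / fact j"
proof -
  have "2 * real j + 1 \<le> 2 * 4 ^ j"
    by (induction j) auto
  have "fact (j + 1) = (j + 1) * (fact j :: real)"
    by simp
  then have "\<bar>bessel_coeff j\<bar> * (real j + 1) = 1 / (2 * 4 ^ j * fact j * fact j)"
    by (simp del: fact_Suc add: bessel_coeff_def abs_mult power_abs divide_simps)
  then have "\<bar>bessel_coeff j\<bar> * (real j + 1) * (2 * real j + 1) = (2 * real j + 1) / (2 * 4 ^ j) * (1 / (fact j * fact j))"
    by simp
  also have "\<dots> \<le> 1 * (1 / (fact j * fact j))"
    using \<open>2 * real j + 1 \<le> 2 * 4 ^ j\<close> by (intro mult_right_mono) auto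
  also have "\<dots> \<le> 1 / fact j"
    by (simp add: divide_simps)
  finally show ?thesis .
qed

fun beta_moment :: "nat \<Rightarrow> nat \<Rightarrow> real" where
  "beta_moment 0 m = 1 / (2 * m + 1)"
| "beta_moment (Suc j) m = beta_moment j m * (2 * j + 2) / (2 * m + 2 * j + 3)"

lemma beta_moment_Suc_right:
  "beta_moment j (Suc m) = beta_moment j m * (2 * m + 1) / (2 * m + 2 * j + 3)"
proof (induction j)
  case 0
  then show ?case
    by (simp add: divide_simps; simp add: algebra_simps)
next
  case (Suc j)
  then show ?case
    by (simp add: divide_inverse algebra_simps)
qed

lemma beta_moment_diff: "beta_moment j m - beta_moment j (Suc m) = beta_moment (Suc j) m"
  by (simp add: beta_moment_Suc_right divide_simps; simp add: algebra_simps)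

lemma cos_kernel_moment_coeff:
  "cos_sqrt_coeff (m + j + 1) * ((m + j + 1) choose (j + 1))
     = cos_sqrt_coeff m * bessel_coeff j * beta_moment j m"
proof (induction j)
  case 0
  then show ?case
    by (simp add: cos_sqrt_coeff_Suc bessel_coeff_0 divide_simps; simp add: algebra_simps)
next
  case (Suc j)
  let ?n = "m + j + 1"
  have b: "real ((m + Suc j + 1) choose (Suc j + 1)) = (?n + 1) / (j + 2) * (?n choose (j + 1))"
    using Suc_times_binomial[of "j + 1" ?n, THEN arg_cong[where f=real]]
    by (simp del: binomial_Suc_Suc add: field_simps)
  have c: "cos_sqrt_coeff (m + Suc j + 1) = - cos_sqrt_coeff ?n / (2 * ?n + 1) / (2 * ?n + 2)"
    using cos_sqrt_coeff_Suc[of ?n] by simp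
  have "cos_sqrt_coeff (m + Suc j + 1) * ((m + Suc j + 1) choose (Suc j + 1))
      = - (cos_sqrt_coeff ?n * (?n choose (j + 1))) * (?n + 1) / (2 * ?n + 1) / (2 * ?n + 2) / (j + 2)"
    unfolding b c by simp
  also have "\<dots> = cos_sqrt_coeff m * bessel_coeff (Suc j) * beta_moment (Suc j) m"
    unfolding Suc.IH by (simp add: bessel_coeff_Suc divide_simps; simp add: algebra_simps)
  finally show ?case .
qed

lemma xsin_kernel_moment_coeff:
  "- 2 * real (m + j + 1) * cos_sqrt_coeff (m + j + 1) * ((m + j + 1) choose (j + 1))
     - (if j = 0 then cos_sqrt_coeff m / 2 else 0)
   = - cos_sqrt_coeff m * bessel_coeff j * (beta_moment j m + 2 * real j * beta_moment (j - 1) m)"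
proof -
  have cos_coeff: "- 2 * real (m + j + 1) * cos_sqrt_coeff (m + j + 1) * ((m + j + 1) choose (j + 1))
      = - 2 * real (m + j + 1) * (cos_sqrt_coeff m * bessel_coeff j * beta_moment j m)"
    by (simp only: mult.assoc cos_kernel_moment_coeff)
  show ?thesis
  proof (cases j)
    case 0
    then show ?thesis
      unfolding cos_coeff by (simp add: bessel_coeff_0 field_simps)
  next
    case (Suc i)
    then show ?thesis
      unfolding cos_coeff by (simp add: divide_simps; simp add: algebra_simps)
  qed
qed

lemma norm_cos_of_real_le:
  fixes \<rho> :: complex
  assumes "\<bar>s\<bar> \<le> T"
  shows "norm (cos (\<rho> * of_real s)) \<le> exp (norm \<rho> * T)"
  using assms by (intro order_trans[OF norm_cos_le]) (simp add: norm_mult mult_left_mono)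

lemma integral_beta_moment:
  fixes T :: real
  assumes "0 \<le> T"
  shows "(LINT s:{0..T}|lborel. (T^2 - s^2) ^ j * s ^ (2 * m)) = T ^ (2 * j + 2 * m + 1) * beta_moment j m"
proof (induction j arbitrary: m)
  case 0
  have "(LINT s:{0..T}|lborel. (T^2 - s^2) ^ 0 * s ^ (2 * m)) = (\<integral>s. s ^ (2 * m) * indicator {0..T} s \<partial>lborel)"
    unfolding set_lebesgue_integral_def by (intro Bochner_Integration.integral_cong) auto
  also have "\<dots> = T ^ (2 * m + 1) / (2 * m + 1)"
    using integral_power[OF assms, of "2 * m"] by simp
  finally show ?case
    by simp
next
  case (Suc j)
  have int: "set_integrable lborel {0..T} (\<lambda>s. (T^2 - s^2) ^ j * s ^ (2 * m))" for m
    by (rule borel_integrable_atLeastAtMost') (intro continuous_intros)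
  have "(LINT s:{0..T}|lborel. (T^2 - s^2) ^ Suc j * s ^ (2 * m))
      = (LINT s:{0..T}|lborel. T^2 * ((T^2 - s^2) ^ j * s ^ (2 * m)) - (T^2 - s^2) ^ j * s ^ (2 * Suc m))"
    by (intro set_lebesgue_integral_cong) (auto simp: algebra_simps power2_eq_square)
  also have "\<dots> = T^2 * (LINT s:{0..T}|lborel. (T^2 - s^2) ^ j * s ^ (2 * m))
      - (LINT s:{0..T}|lborel. (T^2 - s^2) ^ j * s ^ (2 * Suc m))"
    by (simp only: set_integral_diff(2)[OF set_integrable_mult_right[OF int] int] set_integral_mult_right)
  also have "\<dots> = T ^ (2 * Suc j + 2 * m + 1) * (beta_moment j m - beta_moment j (Suc m))"
    unfolding Suc.IH by (simp add: algebra_simps power_add power2_eq_square)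
  finally show ?case
    by (simp only: beta_moment_diff)
qed

lemma integral_suminf_bounded:
  fixes f :: "nat \<Rightarrow> real \<Rightarrow> complex"
  assumes T: "0 \<le> T" and cont: "\<And>j. continuous_on {0..T} (f j)"
    and bound: "\<And>j s. s \<in> {0..T} \<Longrightarrow> norm (f j s) \<le> B j" and B: "summable B"
  shows "(\<lambda>j. LINT s:{0..T}|lborel. f j s) sums (LINT s:{0..T}|lborel. (\<Sum>j. f j s))"
proof -
  define g where "g j s = indicator {0..T} s *\<^sub>R f j s" for j s
  have B_nonneg: "0 \<le> B j" for j
    using bound[of 0 j] T by (meson atLeastAtMost_iff norm_ge_zero order_refl order_trans)
  have int: "integrable lborel (g j)" for j
    using borel_integrable_atLeastAtMost'[OF cont] unfolding g_def set_integrable_def .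
  have g_bound: "norm (g j s) \<le> indicator {0..T} s * B j" for j s
    using bound[of s j] by (auto simp: g_def split: split_indicator)
  have "norm (g j s) \<le> B j" for j s
    using g_bound[of j s] B_nonneg[of j] by (cases "s \<in> {0..T}") auto
  then have "AE s in lborel. summable (\<lambda>j. norm (g j s))"
    by (intro AE_I2 summable_comparison_test'[OF B]) auto
  moreover have "summable (\<lambda>j. \<integral>s. norm (g j s) \<partial>lborel)"
  proof (rule summable_comparison_test'[OF summable_mult2[OF B, of T]])
    fix j
    have "(\<integral>s. norm (g j s) \<partial>lborel) \<le> (\<integral>s. indicator {0..T} s * B j \<partial>lborel)"
      using g_bound int borel_integrable_atLeastAtMost'[of 0 T "\<lambda>_. B j"]
      by (intro integral_mono) (auto simp: set_integrable_def mult.commute)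
    then show "norm (\<integral>s. norm (g j s) \<partial>lborel) \<le> B j * T"
      using T by (simp add: mult.commute)
  qed
  ultimately have "(\<lambda>j. integral\<^sup>L lborel (g j)) sums (\<integral>s. (\<Sum>j. g j s) \<partial>lborel)"
    by (rule sums_integral[OF int])
  moreover have "(\<Sum>j. g j s) = indicator {0..T} s *\<^sub>R (\<Sum>j. f j s)" for s
    by (cases "s \<in> {0..T}") (simp_all add: g_def)
  ultimately show ?thesis
    by (simp add: g_def[abs_def] set_lebesgue_integral_def)
qed

lemma sums_cos_transform_moments:
  fixes g :: "real \<Rightarrow> real" and \<rho> :: complex
  assumes T: "0 \<le> T" and g: "continuous_on {0..T} g"
  shows "(\<lambda>m. of_real (cos_sqrt_coeff m * (LINT s:{0..T}|lborel. g s * s ^ (2 * m))) * (\<rho>^2) ^ m)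
           sums (LINT s:{0..T}|lborel. of_real (g s) * cos (\<rho> * of_real s))"
proof -
  obtain G where G: "\<And>s. s \<in> {0..T} \<Longrightarrow> norm (g s) \<le> G"
    using continuous_on_compact_bound[OF compact_Icc g] by blast
  define f where "f m s = of_real (cos_sqrt_coeff m * (g s * s ^ (2 * m))) * (\<rho>^2) ^ m" for m s
  have "(\<lambda>m. LINT s:{0..T}|lborel. f m s) sums (LINT s:{0..T}|lborel. (\<Sum>m. f m s))"
  proof (rule integral_suminf_bounded[OF T])
    show "continuous_on {0..T} (f m)" for m
      unfolding f_def by (intro continuous_intros g)
    show "summable (\<lambda>m. G * (inverse (fact m) * ((norm \<rho> * T)^2) ^ m))"
      by (intro summable_mult summable_exp)
    fix m s
    assume s: "s \<in> {0..T}"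
    have "norm (f m s) = \<bar>cos_sqrt_coeff m\<bar> * norm (g s) * ((norm \<rho> * s)^2) ^ m"
      using s by (simp add: f_def norm_mult norm_power abs_mult power_mult_distrib power_mult[symmetric])
    also have "\<dots> \<le> inverse (fact m) * G * ((norm \<rho> * T)^2) ^ m"
      using s G[OF s] abs_cos_sqrt_coeff_le[of m]
      by (intro mult_mono power_mono) (auto simp: divide_inverse)
    finally show "norm (f m s) \<le> G * (inverse (fact m) * ((norm \<rho> * T)^2) ^ m)"
      by (simp add: mult_ac)
  qed
  moreover have "(LINT s:{0..T}|lborel. f m s)
      = of_real (cos_sqrt_coeff m * (LINT s:{0..T}|lborel. g s * s ^ (2 * m))) * (\<rho>^2) ^ m" for m
    unfolding f_def set_integral_mult_left set_integral_complex_of_real set_integral_mult_right ..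
  moreover have "(\<Sum>m. f m s) = of_real (g s) * cos (\<rho> * of_real s)" for s
    using sums_mult[OF cos_sqrt_series[of s \<rho>], of "of_real (g s)"]
    by (simp add: f_def sums_iff mult_ac)
  ultimately show ?thesis
    by simp
qed

section \<open>Kernel series\<close>

lemma abs_le_if_mult_Suc_le:
  fixes a b :: real
  assumes "\<bar>a\<bar> * (real j + 1) \<le> b"
  shows "\<bar>a\<bar> \<le> b"
proof -
  have "\<bar>a\<bar> \<le> \<bar>a\<bar> * (real j + 1)"
    by (simp add: algebra_simps)
  then show ?thesis
    using assms by linarith
qed

definition kernel_series :: "(nat \<Rightarrow> real) \<Rightarrow> complex \<Rightarrow> complex" where
  "kernel_series p c = (\<Sum>j. of_real (p j) * c ^ (j + 1))"

text \<open>Coefficient bounds carry the factor \<open>j + 1\<close> so that they also control the derivative in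
  \<open>c\<close>; this is what makes the kernels Lipschitz in \<open>c\<close>.\<close>

lemma summable_kernel_series_terms:
  fixes p :: "nat \<Rightarrow> real" and c :: complex
  assumes "\<And>j. \<bar>p j\<bar> * (real j + 1) \<le> E * X ^ j / fact j"
  shows "summable (\<lambda>j. norm (of_real (p j) * c ^ (j + 1)))"
proof (rule summable_comparison_test'[OF summable_mult[OF summable_exp[of "X * norm c"], of "E * norm c"]])
  fix j
  have "norm (norm (of_real (p j) * c ^ (j + 1))) = \<bar>p j\<bar> * norm c ^ (j + 1)"
    by (simp add: norm_mult norm_power)
  also have "\<dots> \<le> E * X ^ j / fact j * norm c ^ (j + 1)"
    by (rule mult_right_mono[OF abs_le_if_mult_Suc_le[OF assms]]) simp
  also have "\<dots> = E * norm c * (inverse (fact j) * (X * norm c) ^ j)"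
    by (simp add: power_mult_distrib divide_inverse mult_ac)
  finally show "norm (norm (of_real (p j) * c ^ (j + 1))) \<le> E * norm c * (inverse (fact j) * (X * norm c) ^ j)" .
qed

lemma norm_power_diff_le:
  fixes c d :: "'a :: real_normed_field"
  assumes "norm c \<le> R" "norm d \<le> R"
  shows "norm (c ^ Suc n - d ^ Suc n) \<le> real (Suc n) * R ^ n * norm (c - d)"
proof (induction n)
  case (Suc n)
  have "c ^ Suc (Suc n) - d ^ Suc (Suc n) = c * (c ^ Suc n - d ^ Suc n) + (c - d) * d ^ Suc n"
    by (simp add: algebra_simps)
  then have "norm (c ^ Suc (Suc n) - d ^ Suc (Suc n))
      \<le> norm c * norm (c ^ Suc n - d ^ Suc n) + norm (c - d) * norm d ^ Suc n"
    by (metis norm_mult norm_power norm_triangle_ineq)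
  also have "\<dots> \<le> R * (real (Suc n) * R ^ n * norm (c - d)) + norm (c - d) * R ^ Suc n"
    using assms Suc.IH order_trans[OF norm_ge_zero assms(1)]
    by (intro add_mono mult_mono mult_left_mono power_mono) auto
  also have "\<dots> = real (Suc (Suc n)) * R ^ Suc n * norm (c - d)"
    by (simp add: algebra_simps)
  finally show ?case .
qed simp

lemma sums_scaled_exp: "(\<lambda>j. K * (x ^ j / fact j)) sums (K * exp x)"
  for K x :: real
  using sums_mult[OF exp_converges[of x]] by (simp add: divide_inverse mult_ac)

lemma norm_kernel_series_le:
  fixes p :: "nat \<Rightarrow> real" and c :: complex
  assumes p: "\<And>j. \<bar>p j\<bar> * (real j + 1) \<le> E * X ^ j / fact j" and c: "norm c \<le> R"
  shows "norm (kernel_series p c) \<le> E * R * exp (X * R)"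
proof -
  have "norm (of_real (p j) * c ^ (j + 1)) \<le> E * R * ((X * R) ^ j / fact j)" for j
  proof -
    have "norm (of_real (p j) * c ^ (j + 1)) = \<bar>p j\<bar> * norm c ^ (j + 1)"
      by (simp add: norm_mult norm_power)
    also have "\<dots> \<le> E * X ^ j / fact j * R ^ (j + 1)"
      using abs_le_if_mult_Suc_le[OF p] order_trans[OF abs_ge_zero abs_le_if_mult_Suc_le[OF p]] c
      by (intro mult_mono power_mono) auto
    also have "\<dots> = E * R * ((X * R) ^ j / fact j)"
      by (simp add: power_mult_distrib mult_ac)
    finally show ?thesis .
  qed
  then have "norm (kernel_series p c) \<le> (\<Sum>j. E * R * ((X * R) ^ j / fact j))"
    unfolding kernel_series_def by (rule norm_suminf_le[OF _ sums_summable[OF sums_scaled_exp]])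
  also have "\<dots> = E * R * exp (X * R)"
    by (rule sums_unique[OF sums_scaled_exp, symmetric])
  finally show ?thesis .
qed

lemma norm_kernel_series_diff_le:
  fixes p :: "nat \<Rightarrow> real" and c d :: complex
  assumes p: "\<And>j. \<bar>p j\<bar> * (real j + 1) \<le> E * X ^ j / fact j" and c: "norm c \<le> R" and d: "norm d \<le> R"
  shows "norm (kernel_series p c - kernel_series p d) \<le> E * exp (X * R) * norm (c - d)"
proof -
  have R: "0 \<le> R"
    using order_trans[OF norm_ge_zero c] .
  have diff_le: "norm (of_real (p j) * c ^ (j + 1) - of_real (p j) * d ^ (j + 1))
      \<le> E * norm (c - d) * ((X * R) ^ j / fact j)" for j
  proof -
    have "norm (of_real (p j) * c ^ (j + 1) - of_real (p j) * d ^ (j + 1))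
        = \<bar>p j\<bar> * norm (c ^ Suc j - d ^ Suc j)"
      by (simp add: norm_mult right_diff_distrib[symmetric])
    also have "\<dots> \<le> \<bar>p j\<bar> * (real (Suc j) * R ^ j * norm (c - d))"
      by (intro mult_left_mono norm_power_diff_le c d) auto
    also have "\<dots> = (\<bar>p j\<bar> * (real j + 1)) * R ^ j * norm (c - d)"
      by (simp add: algebra_simps)
    also have "\<dots> \<le> E * X ^ j / fact j * R ^ j * norm (c - d)"
      using R by (intro mult_right_mono p) auto
    also have "\<dots> = E * norm (c - d) * ((X * R) ^ j / fact j)"
      by (simp add: power_mult_distrib mult_ac)
    finally show ?thesis .
  qed
  have sc: "summable (\<lambda>j. of_real (p j) * c ^ (j + 1))" and sd: "summable (\<lambda>j. of_real (p j) * d ^ (j + 1))"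
    by (rule summable_norm_cancel[OF summable_kernel_series_terms[OF p]])+
  have "kernel_series p c - kernel_series p d = (\<Sum>j. of_real (p j) * c ^ (j + 1) - of_real (p j) * d ^ (j + 1))"
    unfolding kernel_series_def by (rule suminf_diff[OF sc sd])
  also have "norm \<dots> \<le> (\<Sum>j. E * norm (c - d) * ((X * R) ^ j / fact j))"
    by (rule norm_suminf_le[OF diff_le sums_summable[OF sums_scaled_exp]])
  also have "\<dots> = E * norm (c - d) * exp (X * R)"
    by (rule sums_unique[OF sums_scaled_exp, symmetric])
  also have "\<dots> = E * exp (X * R) * norm (c - d)"
    by (simp add: mult_ac)
  finally show ?thesis .
qed

lemma borel_measurable_kernel_series:
  fixes p :: "nat \<Rightarrow> 'a \<Rightarrow> real"
  assumes "\<And>j. p j \<in> borel_measurable M" and "\<And>x. summable (\<lambda>j. of_real (p j x) * c ^ (j + 1))"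
  shows "(\<lambda>x. kernel_series (\<lambda>j. p j x) c) \<in> borel_measurable M"
  unfolding kernel_series_def
proof (rule borel_measurable_LIMSEQ_metric[where f="\<lambda>i x. \<Sum>j<i. of_real (p j x) * c ^ (j + 1)"])
  show "(\<lambda>x. \<Sum>j<i. of_real (p j x) * c ^ (j + 1)) \<in> borel_measurable M" for i
    using assms(1) by measurable
  show "(\<lambda>i. \<Sum>j<i. of_real (p j x) * c ^ (j + 1)) \<longlonglongrightarrow> (\<Sum>j. of_real (p j x) * c ^ (j + 1))" for x
    by (rule summable_LIMSEQ[OF assms(2)])
qed

lemma sums_integral_kernel_series_cos:
  fixes p :: "nat \<Rightarrow> real \<Rightarrow> real" and \<rho> c :: complex
  assumes T: "0 \<le> T" and p_cont: "\<And>j. continuous_on {0..T} (p j)"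
    and p_bound: "\<And>j s. s \<in> {0..T} \<Longrightarrow> \<bar>p j s\<bar> * (real j + 1) \<le> P * X ^ j / fact j"
  shows "(\<lambda>j. c ^ (j + 1) * (LINT s:{0..T}|lborel. of_real (p j s) * cos (\<rho> * of_real s)))
    sums (LINT s:{0..T}|lborel. kernel_series (\<lambda>j. p j s) c * cos (\<rho> * of_real s))"
proof -
  have "(\<lambda>j. LINT s:{0..T}|lborel. c ^ (j + 1) * (of_real (p j s) * cos (\<rho> * of_real s)))
      sums (LINT s:{0..T}|lborel. (\<Sum>j. c ^ (j + 1) * (of_real (p j s) * cos (\<rho> * of_real s))))"
  proof (rule integral_suminf_bounded[OF T])
    show "continuous_on {0..T} (\<lambda>s. c ^ (j + 1) * (of_real (p j s) * cos (\<rho> * of_real s)))" for j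
      by (intro continuous_intros p_cont)
    show "summable (\<lambda>j. P * norm c * exp (norm \<rho> * T) * (inverse (fact j) * (X * norm c) ^ j))"
      by (intro summable_mult summable_exp)
    fix j s
    assume s: "s \<in> {0..T}"
    have p: "\<bar>p j s\<bar> \<le> P * X ^ j / fact j"
      by (rule abs_le_if_mult_Suc_le[OF p_bound[OF s]])
    have "norm (cos (\<rho> * of_real s)) \<le> exp (norm \<rho> * T)"
      using s by (intro norm_cos_of_real_le) auto
    then have "norm (c ^ (j + 1) * (of_real (p j s) * cos (\<rho> * of_real s)))
        \<le> norm c ^ (j + 1) * (P * X ^ j / fact j * exp (norm \<rho> * T))"
      unfolding norm_mult norm_power norm_of_real using p
      by (intro mult_left_mono mult_mono) (auto intro: order_trans[OF abs_ge_zero p])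
    then show "norm (c ^ (j + 1) * (of_real (p j s) * cos (\<rho> * of_real s)))
        \<le> P * norm c * exp (norm \<rho> * T) * (inverse (fact j) * (X * norm c) ^ j)"
      by (simp add: power_mult_distrib divide_inverse mult_ac)
  qed
  moreover have "(LINT s:{0..T}|lborel. (\<Sum>j. c ^ (j + 1) * (of_real (p j s) * cos (\<rho> * of_real s))))
      = (LINT s:{0..T}|lborel. kernel_series (\<lambda>j. p j s) c * cos (\<rho> * of_real s))"
  proof (intro set_lebesgue_integral_cong allI impI)
    fix s
    assume "s \<in> {0..T}"
    then have sum: "summable (\<lambda>j. of_real (p j s) * c ^ (j + 1))"
      by (rule summable_norm_cancel[OF summable_kernel_series_terms[OF p_bound]])
    show "(\<Sum>j. c ^ (j + 1) * (of_real (p j s) * cos (\<rho> * of_real s)))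
        = kernel_series (\<lambda>j. p j s) c * cos (\<rho> * of_real s)"
      unfolding kernel_series_def by (subst suminf_mult2[OF sum]) (simp add: mult_ac)
  qed simp
  ultimately show ?thesis
    by simp
qed

text \<open>Both kernel representations follow this pattern: \<open>F \<mu>\<close> is an entire power series in
  \<open>\<mu>\<^sup>2\<close>; re-expanded around \<open>\<rho>\<^sup>2\<close> in powers of \<open>c = \<mu>\<^sup>2 - \<rho>\<^sup>2\<close>, the coefficient of \<open>c ^ (j + 1)\<close>
  is matched, moment by moment, with the cosine transform of \<open>p j\<close>. The sequence \<open>d\<close> is a
  boundary term that only occurs for \<open>j = 0\<close>.\<close>

lemma kernel_representation:
  fixes b d :: "nat \<Rightarrow> real" and p :: "nat \<Rightarrow> real \<Rightarrow> real" and F :: "complex \<Rightarrow> complex"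
    and \<rho> \<mu> c D :: complex
  assumes T: "0 \<le> T" and \<mu>: "\<mu>^2 = \<rho>^2 + c"
    and b: "\<And>n. \<bar>b n\<bar> \<le> 1 / fact n"
    and F: "\<And>z. (\<lambda>n. of_real (b n * T ^ (2 * n)) * (z^2) ^ n) sums F z"
    and p_cont: "\<And>j. continuous_on {0..T} (p j)"
    and p_bound: "\<And>j s. s \<in> {0..T} \<Longrightarrow> \<bar>p j s\<bar> * (real j + 1) \<le> P * X ^ j / fact j"
    and moments: "\<And>j m. cos_sqrt_coeff m * (LINT s:{0..T}|lborel. p j s * s ^ (2 * m))
      = (b (m + j + 1) * ((m + j + 1) choose (j + 1)) - (if j = 0 then d m else 0)) * T ^ (2 * (m + j + 1))"
    and D: "(\<lambda>m. of_real (d m * T ^ (2 * m + 2)) * (\<rho>^2) ^ m) sums D"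
  shows "(LINT s:{0..T}|lborel. kernel_series (\<lambda>j. p j s) c * cos (\<rho> * of_real s)) = F \<mu> - F \<rho> - c * D"
proof -
  define a where "a n = complex_of_real (b n * T ^ (2 * n))" for n
  define t where "t = taylor_coeff a (\<rho>^2)"
  have a: "summable (\<lambda>n. norm (a n) * r ^ n)" for r
    unfolding a_def by (rule summable_norm_scaled_coeffs[OF b])
  have "(\<lambda>n. a n * (\<rho>^2 + c) ^ n) sums F \<mu>"
    using F[of \<mu>] unfolding a_def \<mu> .
  then have "(\<lambda>k. c ^ k * t k) sums F \<mu>"
    using sums_taylor_coeff[OF a, of c "\<rho>^2"] by (simp add: t_def sums_iff)
  moreover have "t 0 = F \<rho>"
    using F[of \<rho>] unfolding t_def taylor_coeff_def a_def by (simp add: sums_iff)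
  ultimately have "(\<lambda>j. c ^ (j + 1) * t (j + 1)) sums (F \<mu> - F \<rho>)"
    using sums_Suc_iff[of "\<lambda>k. c ^ k * t k" "F \<mu> - F \<rho>"] by simp
  from sums_diff[OF this sums_single[of 0 "\<lambda>_. c * D"]]
  have lhs: "(\<lambda>j. c ^ (j + 1) * (t (j + 1) - (if j = 0 then D else 0))) sums (F \<mu> - F \<rho> - c * D)"
    by (simp add: right_diff_distrib if_distrib cong: if_cong)
  have moment_sum: "(LINT s:{0..T}|lborel. of_real (p j s) * cos (\<rho> * of_real s))
      = t (j + 1) - (if j = 0 then D else 0)" for j
  proof -
    have "of_real (cos_sqrt_coeff m * (LINT s:{0..T}|lborel. p j s * s ^ (2 * m))) * (\<rho>^2) ^ m
        = a (m + (j + 1)) * of_nat ((m + (j + 1)) choose (j + 1)) * (\<rho>^2) ^ m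
          - (if j = 0 then of_real (d m * T ^ (2 * m + 2)) * (\<rho>^2) ^ m else 0)" for m
      unfolding moments by (simp add: a_def algebra_simps)
    moreover have "(\<lambda>m. a (m + (j + 1)) * of_nat ((m + (j + 1)) choose (j + 1)) * (\<rho>^2) ^ m) sums t (j + 1)"
      unfolding t_def taylor_coeff_def
      by (rule summable_sums[OF summable_norm_cancel[OF summable_taylor_coeff_terms[OF a]]])
    moreover have "(\<lambda>m. if j = 0 then of_real (d m * T ^ (2 * m + 2)) * (\<rho>^2) ^ m else 0)
        sums (if j = 0 then D else 0)"
      using D by simp
    ultimately have "(\<lambda>m. of_real (cos_sqrt_coeff m * (LINT s:{0..T}|lborel. p j s * s ^ (2 * m))) * (\<rho>^2) ^ m)
        sums (t (j + 1) - (if j = 0 then D else 0))"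
      by (simp only:) (rule sums_diff)
    then show ?thesis
      using sums_cos_transform_moments[OF T p_cont] sums_unique2 by blast
  qed
  have "(\<lambda>j. c ^ (j + 1) * (LINT s:{0..T}|lborel. of_real (p j s) * cos (\<rho> * of_real s)))
      sums (LINT s:{0..T}|lborel. kernel_series (\<lambda>j. p j s) c * cos (\<rho> * of_real s))"
    by (rule sums_integral_kernel_series_cos[OF T p_cont]) (rule p_bound)
  then have "(\<lambda>j. c ^ (j + 1) * (t (j + 1) - (if j = 0 then D else 0)))
      sums (LINT s:{0..T}|lborel. kernel_series (\<lambda>j. p j s) c * cos (\<rho> * of_real s))"
    unfolding moment_sum .
  then show ?thesis
    using lhs by (rule sums_unique2)
qed

section \<open>The transformation kernels\<close>

lemma cos_kernel_coeff_le:
  "\<bar>bessel_coeff j * t * (t^2 - s^2) ^ j\<bar> * (real j + 1) \<le> \<bar>t\<bar> * (t^2 + s^2) ^ j / fact j"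
proof -
  have "\<bar>bessel_coeff j\<bar> * (real j + 1) \<le> \<bar>bessel_coeff j\<bar> * (real j + 1) * (2 * real j + 1)"
    using mult_left_mono[of 1 "2 * real j + 1" "\<bar>bessel_coeff j\<bar> * (real j + 1)"] by (simp add: ac_simps)
  also have "\<dots> \<le> 1 / fact j"
    by (rule abs_bessel_coeff_le)
  finally have bessel: "\<bar>bessel_coeff j\<bar> * (real j + 1) \<le> 1 / fact j" .
  have "\<bar>t^2 - s^2\<bar> \<le> t^2 + s^2"
    by (simp add: abs_le_iff)
  have "\<bar>bessel_coeff j * t * (t^2 - s^2) ^ j\<bar> * (real j + 1)
      = (\<bar>bessel_coeff j\<bar> * (real j + 1)) * (\<bar>t\<bar> * \<bar>t^2 - s^2\<bar> ^ j)"
    by (simp add: abs_mult power_abs mult_ac)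
  also have "\<dots> \<le> (1 / fact j) * (\<bar>t\<bar> * (t^2 + s^2) ^ j)"
    using bessel \<open>\<bar>t^2 - s^2\<bar> \<le> t^2 + s^2\<close> by (intro mult_mono mult_left_mono power_mono) auto
  finally show ?thesis
    by simp
qed

lemma xsin_kernel_poly_le:
  fixes T s :: real
  shows "\<bar>(T^2 - s^2) ^ j + 2 * real j * T^2 * (T^2 - s^2) ^ (j - 1)\<bar> \<le> (2 * real j + 1) * (T^2 + s^2) ^ j"
proof (cases j)
  case (Suc i)
  have Y: "\<bar>T^2 - s^2\<bar> \<le> T^2 + s^2" "T^2 \<le> T^2 + s^2"
    by (auto simp: abs_le_iff)
  have "\<bar>(T^2 - s^2) ^ j + 2 * real j * T^2 * (T^2 - s^2) ^ (j - 1)\<bar>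
      \<le> \<bar>T^2 - s^2\<bar> ^ j + 2 * real j * T^2 * \<bar>T^2 - s^2\<bar> ^ (j - 1)"
    by (rule order_trans[OF abs_triangle_ineq]) (simp add: abs_mult power_abs)
  also have "\<dots> \<le> (T^2 + s^2) ^ j + 2 * real j * (T^2 + s^2) * (T^2 + s^2) ^ (j - 1)"
    using Y by (intro add_mono mult_mono power_mono mult_left_mono) auto
  also have "\<dots> = (2 * real j + 1) * (T^2 + s^2) ^ j"
    using Suc by (simp add: algebra_simps)
  finally show ?thesis .
qed simp

lemma xsin_kernel_coeff_le:
  "\<bar>- bessel_coeff j * T * ((T^2 - s^2) ^ j + 2 * real j * T^2 * (T^2 - s^2) ^ (j - 1))\<bar> * (real j + 1)
     \<le> \<bar>T\<bar> * (T^2 + s^2) ^ j / fact j"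
proof -
  have "\<bar>- bessel_coeff j * T * ((T^2 - s^2) ^ j + 2 * real j * T^2 * (T^2 - s^2) ^ (j - 1))\<bar> * (real j + 1)
      = (\<bar>bessel_coeff j\<bar> * (real j + 1)) * (\<bar>T\<bar> * \<bar>(T^2 - s^2) ^ j + 2 * real j * T^2 * (T^2 - s^2) ^ (j - 1)\<bar>)"
    by (simp add: abs_mult mult_ac)
  also have "\<dots> \<le> (\<bar>bessel_coeff j\<bar> * (real j + 1)) * (\<bar>T\<bar> * ((2 * real j + 1) * (T^2 + s^2) ^ j))"
    by (intro mult_left_mono xsin_kernel_poly_le) auto
  also have "\<dots> = (\<bar>bessel_coeff j\<bar> * (real j + 1) * (2 * real j + 1)) * (\<bar>T\<bar> * (T^2 + s^2) ^ j)"
    by (simp add: mult_ac)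
  also have "\<dots> \<le> (1 / fact j) * (\<bar>T\<bar> * (T^2 + s^2) ^ j)"
    by (intro mult_right_mono abs_bessel_coeff_le) auto
  finally show ?thesis
    by simp
qed

lemma kernel_coeff_bound_square:
  fixes a s t T :: real
  assumes a: "\<bar>a\<bar> * (real j + 1) \<le> \<bar>t\<bar> * (t^2 + s^2) ^ j / fact j" and "\<bar>t\<bar> \<le> T" "\<bar>s\<bar> \<le> T"
  shows "\<bar>a\<bar> * (real j + 1) \<le> T * (2 * T^2) ^ j / fact j"
proof -
  have "t^2 + s^2 \<le> 2 * T^2"
    using assms(2,3) power_mono[of "\<bar>t\<bar>" T 2] power_mono[of "\<bar>s\<bar>" T 2] by simp
  then have "\<bar>t\<bar> * (t^2 + s^2) ^ j \<le> T * (2 * T^2) ^ j"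
    using assms(2) by (intro mult_mono power_mono) auto
  then show ?thesis
    by (rule order_trans[OF a divide_right_mono]) simp
qed

text \<open>With \<open>z\<^sup>2 = c (t\<^sup>2 - s\<^sup>2)\<close> the kernel is \<open>- c t J\<^sub>1(z) / z\<close>, the classical kernel of the
  transformation operator carrying \<open>cos (\<rho> t)\<close> to \<open>cos (\<mu> t)\<close>; the second kernel is
  \<open>- T \<partial>\<^sub>T\<close> of the first, evaluated at \<open>t = T\<close>.\<close>

definition cos_kernel :: "complex \<Rightarrow> real \<Rightarrow> real \<Rightarrow> complex" where
  "cos_kernel c t s = kernel_series (\<lambda>j. bessel_coeff j * t * (t^2 - s^2) ^ j) c"

definition xsin_kernel :: "complex \<Rightarrow> real \<Rightarrow> real \<Rightarrow> complex" where
  "xsin_kernel c T s =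
     kernel_series (\<lambda>j. - bessel_coeff j * T * ((T^2 - s^2) ^ j + 2 * real j * T^2 * (T^2 - s^2) ^ (j - 1))) c"

theorem cos_kernel_representation:
  fixes \<rho> \<mu> c :: complex
  assumes t: "0 \<le> t" and \<mu>: "\<mu>^2 = \<rho>^2 + c"
  shows "(LINT s:{0..t}|lborel. cos_kernel c t s * cos (\<rho> * of_real s)) = cos (\<mu> * of_real t) - cos (\<rho> * of_real t)"
proof -
  have "(LINT s:{0..t}|lborel. cos_kernel c t s * cos (\<rho> * of_real s))
      = cos (\<mu> * of_real t) - cos (\<rho> * of_real t) - c * 0"
    unfolding cos_kernel_def
  proof (rule kernel_representation[OF t \<mu> abs_cos_sqrt_coeff_le cos_sqrt_series, where d="\<lambda>_. 0"])
    show "continuous_on {0..t} (\<lambda>s. bessel_coeff j * t * (t^2 - s^2) ^ j)" for j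
      by (intro continuous_intros)
    show "\<bar>bessel_coeff j * t * (t^2 - s^2) ^ j\<bar> * (real j + 1) \<le> t * (2 * t^2) ^ j / fact j" if "s \<in> {0..t}" for j s
      using that by (intro kernel_coeff_bound_square[OF cos_kernel_coeff_le]) auto
    show "cos_sqrt_coeff m * (LINT s:{0..t}|lborel. bessel_coeff j * t * (t^2 - s^2) ^ j * s ^ (2 * m))
        = (cos_sqrt_coeff (m + j + 1) * ((m + j + 1) choose (j + 1)) - (if j = 0 then 0 else 0)) * t ^ (2 * (m + j + 1))" for j m
    proof -
      have "(LINT s:{0..t}|lborel. bessel_coeff j * t * (t^2 - s^2) ^ j * s ^ (2 * m))
          = bessel_coeff j * t * (LINT s:{0..t}|lborel. (t^2 - s^2) ^ j * s ^ (2 * m))"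
        by (simp add: mult.assoc)
      also have "\<dots> = bessel_coeff j * beta_moment j m * t ^ (2 * (m + j + 1))"
        unfolding integral_beta_moment[OF t] by (simp add: power_add power2_eq_square mult_ac)
      finally show ?thesis
        by (simp only: mult.assoc[symmetric] cos_kernel_moment_coeff[symmetric] if_cancel diff_0_right)
    qed
  qed simp
  then show ?thesis
    by simp
qed

lemma integral_xsin_kernel_coeff_moment:
  assumes T: "0 \<le> T"
  shows "(LINT s:{0..T}|lborel. - bessel_coeff j * T * ((T^2 - s^2) ^ j + 2 * real j * T^2 * (T^2 - s^2) ^ (j - 1)) * s ^ (2 * m))
    = - bessel_coeff j * (beta_moment j m + 2 * real j * beta_moment (j - 1) m) * T ^ (2 * (m + j + 1))"
proof -
  have int: "set_integrable lborel {0..T} (\<lambda>s. (T^2 - s^2) ^ i * s ^ (2 * m))" for i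
    by (rule borel_integrable_atLeastAtMost') (intro continuous_intros)
  have "(LINT s:{0..T}|lborel. - bessel_coeff j * T * ((T^2 - s^2) ^ j + 2 * real j * T^2 * (T^2 - s^2) ^ (j - 1)) * s ^ (2 * m))
      = - bessel_coeff j * T * ((LINT s:{0..T}|lborel. (T^2 - s^2) ^ j * s ^ (2 * m))
          + 2 * real j * T^2 * (LINT s:{0..T}|lborel. (T^2 - s^2) ^ (j - 1) * s ^ (2 * m)))"
    by (simp only: set_integral_add(2)[OF int set_integrable_mult_right[OF int], symmetric]
        set_integral_mult_right[symmetric]) (simp add: algebra_simps)
  also have "\<dots> = - bessel_coeff j * (beta_moment j m + 2 * real j * beta_moment (j - 1) m) * T ^ (2 * (m + j + 1))"
    unfolding integral_beta_moment[OF T]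
    by (cases j) (simp_all add: algebra_simps power_add power2_eq_square)
  finally show ?thesis .
qed

theorem xsin_kernel_representation:
  fixes \<rho> \<mu> c :: complex
  assumes T: "0 \<le> T" and \<mu>: "\<mu>^2 = \<rho>^2 + c"
  shows "(LINT s:{0..T}|lborel. xsin_kernel c T s * cos (\<rho> * of_real s))
    = of_real T * \<mu> * sin (\<mu> * of_real T) - of_real T * \<rho> * sin (\<rho> * of_real T)
      - c * (of_real (T^2 / 2) * cos (\<rho> * of_real T))"
  unfolding xsin_kernel_def
proof (rule kernel_representation[OF T \<mu> abs_xsin_sqrt_coeff_le xsin_sqrt_series[of T],
      where d="\<lambda>m. cos_sqrt_coeff m / 2"])
  show "continuous_on {0..T} (\<lambda>s. - bessel_coeff j * T * ((T^2 - s^2) ^ j + 2 * real j * T^2 * (T^2 - s^2) ^ (j - 1)))" for j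
    by (intro continuous_intros)
  show "\<bar>- bessel_coeff j * T * ((T^2 - s^2) ^ j + 2 * real j * T^2 * (T^2 - s^2) ^ (j - 1))\<bar>
      * (real j + 1) \<le> T * (2 * T^2) ^ j / fact j" if "s \<in> {0..T}" for j s
    using that by (intro kernel_coeff_bound_square[OF xsin_kernel_coeff_le]) auto
  show "cos_sqrt_coeff m * (LINT s:{0..T}|lborel. - bessel_coeff j * T * ((T^2 - s^2) ^ j
          + 2 * real j * T^2 * (T^2 - s^2) ^ (j - 1)) * s ^ (2 * m))
      = (- 2 * real (m + j + 1) * cos_sqrt_coeff (m + j + 1) * ((m + j + 1) choose (j + 1))
          - (if j = 0 then cos_sqrt_coeff m / 2 else 0)) * T ^ (2 * (m + j + 1))" for j m
    unfolding integral_xsin_kernel_coeff_moment[OF T] xsin_kernel_moment_coeff by (simp add: mult_ac)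
  show "(\<lambda>m. of_real (cos_sqrt_coeff m / 2 * T ^ (2 * m + 2)) * (\<rho>^2) ^ m)
      sums (of_real (T^2 / 2) * cos (\<rho> * of_real T))"
    using sums_mult[OF cos_sqrt_series[of T \<rho>], of "of_real (T^2 / 2)"]
    by (simp add: power_add power2_eq_square mult_ac)
qed

lemma cos_kernel_bounds:
  assumes "\<bar>t\<bar> \<le> T" "\<bar>s\<bar> \<le> T" and "norm c \<le> R"
  shows "norm (cos_kernel c t s) \<le> T * R * exp (2 * T^2 * R)"
    and "norm d \<le> R \<Longrightarrow> norm (cos_kernel c t s - cos_kernel d t s) \<le> T * exp (2 * T^2 * R) * norm (c - d)"
  unfolding cos_kernel_def
  by (intro norm_kernel_series_le norm_kernel_series_diff_le
      kernel_coeff_bound_square[OF cos_kernel_coeff_le assms(1,2)] assms(3))+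

lemma xsin_kernel_bounds:
  assumes "\<bar>t\<bar> \<le> T" "\<bar>s\<bar> \<le> T" and "norm c \<le> R"
  shows "norm (xsin_kernel c t s) \<le> T * R * exp (2 * T^2 * R)"
    and "norm d \<le> R \<Longrightarrow> norm (xsin_kernel c t s - xsin_kernel d t s) \<le> T * exp (2 * T^2 * R) * norm (c - d)"
  unfolding xsin_kernel_def
  by (intro norm_kernel_series_le norm_kernel_series_diff_le
      kernel_coeff_bound_square[OF xsin_kernel_coeff_le assms(1,2)] assms(3))+

lemma norm_mult_cos_kernel_diff_le:
  fixes \<omega>1 \<omega>2 c1 c2 :: complex
  assumes "\<bar>t\<bar> \<le> T" "\<bar>s\<bar> \<le> T" and c1: "norm c1 \<le> R" and c2: "norm c2 \<le> R" and \<omega>1: "norm \<omega>1 \<le> W"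
  shows "norm (\<omega>1 * cos_kernel c1 t s - \<omega>2 * cos_kernel c2 t s)
    \<le> W * (T * exp (2 * T^2 * R) * norm (c1 - c2)) + norm (\<omega>1 - \<omega>2) * (T * R * exp (2 * T^2 * R))"
proof -
  have "\<omega>1 * cos_kernel c1 t s - \<omega>2 * cos_kernel c2 t s
      = \<omega>1 * (cos_kernel c1 t s - cos_kernel c2 t s) + (\<omega>1 - \<omega>2) * cos_kernel c2 t s"
    by (simp add: algebra_simps)
  also have "norm \<dots> \<le> W * (T * exp (2 * T^2 * R) * norm (c1 - c2)) + norm (\<omega>1 - \<omega>2) * (T * R * exp (2 * T^2 * R))"
    using cos_kernel_bounds(2)[OF assms(1,2) c1 c2] cos_kernel_bounds(1)[OF assms(1,2) c2] \<omega>1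
      order_trans[OF norm_ge_zero \<omega>1] order_trans[OF abs_ge_zero assms(1)]
    by (intro order_trans[OF norm_triangle_ineq] add_mono) (auto simp: norm_mult intro!: mult_mono)
  finally show ?thesis .
qed

lemma borel_measurable_cos_kernel [measurable]:
  assumes [measurable]: "f \<in> borel_measurable M" "g \<in> borel_measurable M"
  shows "(\<lambda>x. cos_kernel c (f x) (g x)) \<in> borel_measurable M"
  unfolding cos_kernel_def
  by (rule borel_measurable_kernel_series[OF _ summable_norm_cancel[OF summable_kernel_series_terms[OF cos_kernel_coeff_le]]])
     measurable

lemma borel_measurable_xsin_kernel [measurable]:
  assumes [measurable]: "f \<in> borel_measurable M" "g \<in> borel_measurable M"
  shows "(\<lambda>x. xsin_kernel c (f x) (g x)) \<in> borel_measurable M"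
  unfolding xsin_kernel_def
  by (rule borel_measurable_kernel_series[OF _ summable_norm_cancel[OF summable_kernel_series_terms[OF xsin_kernel_coeff_le]]])
     measurable

section \<open>Square-integrable functions on \<open>[0, \<pi>]\<close>\<close>

lemma L2_0pi_borel_measurable:
  "L2_0pi f \<Longrightarrow> (\<lambda>t. indicator {0..pi} t *\<^sub>R f t) \<in> borel_measurable lborel"
  unfolding L2_0pi_def set_borel_measurable_def by simp

lemma L2_0pi_square_integrable: "L2_0pi f \<Longrightarrow> set_integrable lborel {0..pi} (\<lambda>t. (cmod (f t))\<^sup>2)"
  unfolding L2_0pi_def by simp

lemma L2_norm_0pi_nonneg: "0 \<le> L2_norm_0pi f"
  unfolding L2_norm_0pi_def set_lebesgue_integral_def
  by (simp add: Bochner_Integration.integral_nonneg)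

lemma sum_square_le:
  fixes a b :: real
  shows "(a + b)\<^sup>2 \<le> 2 * a\<^sup>2 + 2 * b\<^sup>2"
proof -
  have "0 \<le> (a - b)\<^sup>2"
    by simp
  then show ?thesis
    by (simp add: power2_sum power2_diff)
qed

lemma set_integral_const_0pi: "(LINT t:{0..pi}|lborel. (C :: real)) = C * pi"
  unfolding set_lebesgue_integral_def by (simp add: mult.commute)

lemma L2_0pi_set_integrable:
  assumes "L2_0pi f"
  shows "set_integrable lborel {0..pi} f"
  unfolding set_integrable_def
proof (rule Bochner_Integration.integrable_bound[OF _ L2_0pi_borel_measurable[OF assms]])
  have "set_integrable lborel {0..pi} (\<lambda>t. 1 + (cmod (f t))\<^sup>2)"
    by (intro set_integral_add(1) borel_integrable_atLeastAtMost' L2_0pi_square_integrable assms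
        continuous_on_const)
  then show "integrable lborel (\<lambda>t. indicator {0..pi} t *\<^sub>R (1 + (cmod (f t))\<^sup>2))"
    unfolding set_integrable_def .
  have "cmod (f t) \<le> 1 + (cmod (f t))\<^sup>2" for t
    using zero_le_power2[of "cmod (f t) - 1"] zero_le_power2[of "cmod (f t)"]
    by (simp add: power2_diff; linarith)
  then show "AE t in lborel. norm (indicator {0..pi} t *\<^sub>R f t) \<le> norm (indicator {0..pi} t *\<^sub>R (1 + (cmod (f t))\<^sup>2))"
    by (intro AE_I2) (auto split: split_indicator)
qed

lemma L2_0pi_if_dominated:
  assumes f: "set_borel_measurable lborel {0..pi} f" and h: "set_integrable lborel {0..pi} h"
    and le: "\<And>s. s \<in> {0..pi} \<Longrightarrow> (cmod (f s))\<^sup>2 \<le> h s"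
  shows "L2_0pi f"
  unfolding L2_0pi_def set_integrable_def
proof (intro conjI f Bochner_Integration.integrable_bound[OF h[unfolded set_integrable_def]])
  have "(\<lambda>s. (cmod (indicator {0..pi} s *\<^sub>R f s))\<^sup>2) \<in> borel_measurable lborel"
    using f unfolding set_borel_measurable_def by measurable
  then show "(\<lambda>s. indicator {0..pi} s *\<^sub>R (cmod (f s))\<^sup>2) \<in> borel_measurable lborel"
    by (rule measurable_cong[THEN iffD1, rotated]) (simp split: split_indicator)
  show "AE s in lborel. norm (indicator {0..pi} s *\<^sub>R (cmod (f s))\<^sup>2) \<le> norm (indicator {0..pi} s *\<^sub>R h s)"
    using le by (intro AE_I2) (auto split: split_indicator intro: order_trans[OF _ abs_ge_self])
qed

lemma L2_0pi_diff:
  assumes f: "L2_0pi f" and g: "L2_0pi g"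
  shows "L2_0pi (\<lambda>t. f t - g t)"
proof (rule L2_0pi_if_dominated)
  show "set_borel_measurable lborel {0..pi} (\<lambda>t. f t - g t)"
    using L2_0pi_borel_measurable[OF f] L2_0pi_borel_measurable[OF g]
    unfolding set_borel_measurable_def by (simp add: scaleR_diff_right)
  show "set_integrable lborel {0..pi} (\<lambda>t. 2 * (cmod (f t))\<^sup>2 + 2 * (cmod (g t))\<^sup>2)"
    by (intro set_integral_add(1) set_integrable_mult_right L2_0pi_square_integrable f g)
  fix s
  have "(cmod (f s - g s))\<^sup>2 \<le> (cmod (f s) + cmod (g s))\<^sup>2"
    by (intro power_mono norm_triangle_ineq4) auto
  also have "\<dots> \<le> 2 * (cmod (f s))\<^sup>2 + 2 * (cmod (g s))\<^sup>2"
    by (rule sum_square_le)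
  finally show "(cmod (f s - g s))\<^sup>2 \<le> 2 * (cmod (f s))\<^sup>2 + 2 * (cmod (g s))\<^sup>2" .
qed

text \<open>Cauchy--Schwarz against the constant function: expanding
  \<open>0 \<le> \<integral>(|f| - L/\<pi>)\<^sup>2\<close> with \<open>L = \<integral>|f|\<close> gives \<open>L\<^sup>2 \<le> \<pi> \<integral>|f|\<^sup>2\<close>.\<close>

lemma set_integral_norm_le_L2_norm_0pi:
  assumes f: "L2_0pi f"
  shows "(LINT t:{0..pi}|lborel. norm (f t)) \<le> sqrt pi * L2_norm_0pi f"
proof -
  define L where "L = (LINT t:{0..pi}|lborel. norm (f t))"
  define I where "I = (LINT t:{0..pi}|lborel. (cmod (f t))\<^sup>2)"
  define m where "m = L / pi"
  have int_norm: "set_integrable lborel {0..pi} (\<lambda>t. norm (f t))"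
    by (rule set_integrable_norm[OF L2_0pi_set_integrable[OF f]])
  have int_sq: "set_integrable lborel {0..pi} (\<lambda>t. (cmod (f t))\<^sup>2)"
    by (rule L2_0pi_square_integrable[OF f])
  have int_const: "set_integrable lborel {0..pi} (\<lambda>t. m\<^sup>2)"
    by (rule borel_integrable_atLeastAtMost') simp
  have int_lin: "set_integrable lborel {0..pi} (\<lambda>t. (cmod (f t))\<^sup>2 - 2 * m * norm (f t))"
    by (intro set_integral_diff(1) int_sq set_integrable_mult_right int_norm)
  have "0 \<le> (LINT t:{0..pi}|lborel. (norm (f t) - m)\<^sup>2)"
    unfolding set_lebesgue_integral_def by (intro Bochner_Integration.integral_nonneg) auto
  also have "\<dots> = (LINT t:{0..pi}|lborel. ((cmod (f t))\<^sup>2 - 2 * m * norm (f t)) + m\<^sup>2)"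
    by (simp add: power2_diff algebra_simps)
  also have "\<dots> = I - 2 * m * L + m\<^sup>2 * pi"
    unfolding set_integral_add(2)[OF int_lin int_const] set_integral_const_0pi
      set_integral_diff(2)[OF int_sq set_integrable_mult_right[OF int_norm]] set_integral_mult_right
    by (simp add: I_def L_def)
  also have "\<dots> = I - L\<^sup>2 / pi"
    by (simp add: m_def power2_eq_square field_simps)
  finally have "L\<^sup>2 \<le> pi * I"
    by (simp add: field_simps)
  then have "L \<le> sqrt (pi * I)"
    by (rule real_le_rsqrt)
  then show ?thesis
    by (simp add: L_def I_def L2_norm_0pi_def real_sqrt_mult)
qed

lemma L2_norm_0pi_le_pointwise:
  assumes g: "L2_0pi g" and f: "set_borel_measurable lborel {0..pi} f" and P: "0 \<le> P"
    and le: "\<And>s. s \<in> {0..pi} \<Longrightarrow> norm (f s) \<le> norm (g s) + P"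
  shows "L2_0pi f" and "L2_norm_0pi f \<le> sqrt 2 * (L2_norm_0pi g + sqrt pi * P)"
proof -
  have int_g: "set_integrable lborel {0..pi} (\<lambda>t. 2 * (cmod (g t))\<^sup>2)"
    by (intro set_integrable_mult_right L2_0pi_square_integrable g)
  have int_P: "set_integrable lborel {0..pi} (\<lambda>t. 2 * P\<^sup>2)"
    by (rule borel_integrable_atLeastAtMost') simp
  have sq_le: "(cmod (f s))\<^sup>2 \<le> 2 * (cmod (g s))\<^sup>2 + 2 * P\<^sup>2" if s: "s \<in> {0..pi}" for s
  proof -
    have "(cmod (f s))\<^sup>2 \<le> (cmod (g s) + P)\<^sup>2"
      using le[OF s] by (intro power_mono) auto
    also have "\<dots> \<le> 2 * (cmod (g s))\<^sup>2 + 2 * P\<^sup>2"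
      by (rule sum_square_le)
    finally show ?thesis .
  qed
  show f_L2: "L2_0pi f"
    by (rule L2_0pi_if_dominated[OF f set_integral_add(1)[OF int_g int_P] sq_le])
  have "(LINT t:{0..pi}|lborel. (cmod (f t))\<^sup>2) \<le> (LINT t:{0..pi}|lborel. 2 * (cmod (g t))\<^sup>2 + 2 * P\<^sup>2)"
    by (rule set_integral_mono[OF L2_0pi_square_integrable[OF f_L2] set_integral_add(1)[OF int_g int_P] sq_le])
  also have "\<dots> = 2 * (L2_norm_0pi g)\<^sup>2 + 2 * (sqrt pi * P)\<^sup>2"
    unfolding set_integral_add(2)[OF int_g int_P] set_integral_const_0pi set_integral_mult_right
    using L2_norm_0pi_nonneg[of g] by (simp add: L2_norm_0pi_def power_mult_distrib)
  also have "\<dots> \<le> (sqrt 2 * (L2_norm_0pi g + sqrt pi * P))\<^sup>2"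
    by (simp add: power_mult_distrib power2_sum L2_norm_0pi_nonneg P)
  finally show "L2_norm_0pi f \<le> sqrt 2 * (L2_norm_0pi g + sqrt pi * P)"
    unfolding L2_norm_0pi_def[of f] using L2_norm_0pi_nonneg[of g] P by (intro real_le_lsqrt) auto
qed

lemma set_integrable_bounded_0pi:
  fixes f :: "real \<Rightarrow> complex"
  assumes "f \<in> borel_measurable lborel" and "\<And>s. s \<in> {0..pi} \<Longrightarrow> norm (f s) \<le> B"
  shows "set_integrable lborel {0..pi} f"
  unfolding set_integrable_def
proof (rule Bochner_Integration.integrable_bound)
  show "integrable lborel (\<lambda>s. indicator {0..pi} s *\<^sub>R B)"
    using borel_integrable_atLeastAtMost'[of 0 pi "\<lambda>_. B"] unfolding set_integrable_def by simp
  show "(\<lambda>s. indicator {0..pi} s *\<^sub>R f s) \<in> borel_measurable lborel"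
    using assms(1) by measurable
  show "AE s in lborel. norm (indicator {0..pi} s *\<^sub>R f s) \<le> norm (indicator {0..pi} s *\<^sub>R B)"
    using assms(2) by (intro AE_I2) (auto split: split_indicator intro: order_trans[OF _ abs_ge_self])
qed

lemma set_integrable_L2_mult_bounded:
  assumes N: "L2_0pi N" and g: "g \<in> borel_measurable lborel" and le: "\<And>s. s \<in> {0..pi} \<Longrightarrow> norm (g s) \<le> B"
  shows "set_integrable lborel {0..pi} (\<lambda>t. N t * g t)"
  unfolding set_integrable_def
proof (rule Bochner_Integration.integrable_bound)
  show "integrable lborel (\<lambda>t. B * norm (indicator {0..pi} t *\<^sub>R N t))"
    using L2_0pi_set_integrable[OF N] unfolding set_integrable_def by (intro integrable_mult_right integrable_norm)
  show "(\<lambda>t. indicator {0..pi} t *\<^sub>R (N t * g t)) \<in> borel_measurable lborel"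
    using L2_0pi_borel_measurable[OF N] g by (simp add: scaleR_conv_of_real mult.assoc[symmetric]) measurable
  have "norm (N t * g t) \<le> B * norm (N t)" if "t \<in> {0..pi}" for t
    using mult_left_mono[OF le[OF that] norm_ge_zero[of "N t"]] by (simp add: norm_mult mult.commute)
  then show "AE t in lborel. norm (indicator {0..pi} t *\<^sub>R (N t * g t)) \<le> norm (B * norm (indicator {0..pi} t *\<^sub>R N t))"
    by (intro AE_I2) (auto split: split_indicator intro: order_trans[OF _ abs_ge_self])
qed

lemma norm_set_integral_L2_mult_le:
  assumes N: "L2_0pi N" and g: "g \<in> borel_measurable lborel" and le: "\<And>t. t \<in> {0..pi} \<Longrightarrow> norm (g t) \<le> B"
  shows "norm (LINT t:{0..pi}|lborel. N t * g t) \<le> B * (LINT t:{0..pi}|lborel. norm (N t))"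
proof -
  have "norm (LINT t:{0..pi}|lborel. N t * g t) \<le> (LINT t:{0..pi}|lborel. norm (N t * g t))"
    by (rule set_integral_norm_bound[OF set_integrable_L2_mult_bounded[OF N g le]])
  also have "\<dots> \<le> (LINT t:{0..pi}|lborel. B * norm (N t))"
  proof (rule set_integral_mono)
    show "set_integrable lborel {0..pi} (\<lambda>t. norm (N t * g t))"
      by (rule set_integrable_norm[OF set_integrable_L2_mult_bounded[OF N g le]])
    show "set_integrable lborel {0..pi} (\<lambda>t. B * norm (N t))"
      by (intro set_integrable_mult_right set_integrable_norm L2_0pi_set_integrable N)
    show "norm (N t * g t) \<le> B * norm (N t)" if "t \<in> {0..pi}" for t
      using mult_left_mono[OF le[OF that] norm_ge_zero[of "N t"]] by (simp add: norm_mult mult.commute)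
  qed
  finally show ?thesis
    by simp
qed

section \<open>The adjoint kernel operator\<close>

lemma set_integral_swap_bounded_kernel:
  fixes N :: "real \<Rightarrow> complex" and k :: "real \<Rightarrow> real \<Rightarrow> complex"
  assumes N: "set_integrable lborel {0..pi} N"
    and k: "(\<lambda>x. k (fst x) (snd x)) \<in> borel_measurable (lborel \<Otimes>\<^sub>M lborel)"
    and le: "\<And>s t. s \<in> {0..pi} \<Longrightarrow> t \<in> {0..pi} \<Longrightarrow> norm (k t s) \<le> K"
  shows "(LINT t:{0..pi}|lborel. (LINT s:{0..pi}|lborel. N t * k t s))
       = (LINT s:{0..pi}|lborel. (LINT t:{0..pi}|lborel. N t * k t s))"
proof -
  define N' where "N' t = indicator {0..pi} t *\<^sub>R N t" for t
  have [measurable]: "N' \<in> borel_measurable lborel"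
    using N unfolding N'_def set_integrable_def by (rule borel_measurable_integrable)
  define F where "F t s = indicator {0..pi} s *\<^sub>R (N' t * k t s)" for t s
  have F_meas [measurable]: "(\<lambda>x. F (fst x) (snd x)) \<in> borel_measurable (lborel \<Otimes>\<^sub>M lborel)"
    using k unfolding F_def by measurable
  have K: "0 \<le> K"
    using order_trans[OF norm_ge_zero le[of 0 0]] by simp
  have F_le: "norm (F t s) \<le> indicator {0..pi} s * (norm (N' t) * K)" for t s
    using le[of s t] K by (auto simp: F_def N'_def norm_mult mult_left_mono split: split_indicator)
  have bound_int: "integrable lborel (\<lambda>s. indicator {0..pi} s * (norm (N' t) * K))" for t
    using borel_integrable_atLeastAtMost'[of 0 pi "\<lambda>_. norm (N' t) * K"]
    unfolding set_integrable_def by (simp add: mult.commute)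
  have F_int: "integrable lborel (F t)" for t
  proof (rule Bochner_Integration.integrable_bound[OF bound_int])
    show "F t \<in> borel_measurable lborel"
      using measurable_Pair2[OF F_meas, of t] by simp
    show "AE s in lborel. norm (F t s) \<le> norm (indicator {0..pi} s * (norm (N' t) * K))"
      using F_le K by (intro AE_I2) (auto intro: order_trans[OF _ abs_ge_self])
  qed
  have "integrable (lborel \<Otimes>\<^sub>M lborel) (\<lambda>x. F (fst x) (snd x))"
  proof (rule lborel_pair.Fubini_integrable[OF F_meas])
    show "integrable lborel (\<lambda>t. \<integral>s. norm (F (fst (t, s)) (snd (t, s))) \<partial>lborel)"
    proof (rule Bochner_Integration.integrable_bound)
      show "integrable lborel (\<lambda>t. K * pi * norm (N' t))"
        using N unfolding N'_def set_integrable_def by (intro integrable_mult_right integrable_norm)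
      have "(\<integral>s. norm (F t s) \<partial>lborel) \<le> K * pi * norm (N' t)" for t
        using integral_mono[OF integrable_norm[OF F_int] bound_int F_le] by (simp add: mult_ac)
      then show "AE t in lborel. norm (\<integral>s. norm (F (fst (t, s)) (snd (t, s))) \<partial>lborel) \<le> norm (K * pi * norm (N' t))"
        using K by (intro AE_I2) simp
    qed measurable
    show "AE t in lborel. integrable lborel (\<lambda>s. F (fst (t, s)) (snd (t, s)))"
      using F_int by simp
  qed
  then have "(\<integral>s. (\<integral>t. F t s \<partial>lborel) \<partial>lborel) = (\<integral>t. (\<integral>s. F t s \<partial>lborel) \<partial>lborel)"
    by (intro lborel_pair.Fubini_integral) (simp add: split_beta')
  moreover have "(\<integral>s. F t s \<partial>lborel) = indicator {0..pi} t *\<^sub>R (N t * (LINT s:{0..pi}|lborel. k t s))" for t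
  proof -
    have "F t = (\<lambda>s. (indicator {0..pi} t *\<^sub>R N t) * (indicator {0..pi} s *\<^sub>R k t s))"
      by (auto simp: fun_eq_iff F_def N'_def split: split_indicator)
    then show ?thesis
      unfolding set_lebesgue_integral_def integral_mult_right_zero by (simp add: scaleR_conv_of_real)
  qed
  moreover have "(\<integral>t. F t s \<partial>lborel) = indicator {0..pi} s *\<^sub>R (LINT t:{0..pi}|lborel. N t * k t s)" for s
    by (auto simp: F_def N'_def set_lebesgue_integral_def intro!: Bochner_Integration.integral_cong
        split: split_indicator)
  ultimately show ?thesis
    by (simp add: set_lebesgue_integral_def)
qed

lemma set_integral_triangle_swap:
  fixes N :: "real \<Rightarrow> complex" and k :: "real \<Rightarrow> real \<Rightarrow> complex"
  assumes N: "set_integrable lborel {0..pi} N"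
    and k: "(\<lambda>x. k (fst x) (snd x)) \<in> borel_measurable (lborel \<Otimes>\<^sub>M lborel)"
    and le: "\<And>s t. s \<in> {0..pi} \<Longrightarrow> t \<in> {0..pi} \<Longrightarrow> norm (k t s) \<le> K"
  shows "(LINT t:{0..pi}|lborel. N t * (LINT s:{0..t}|lborel. k t s))
       = (LINT s:{0..pi}|lborel. (LINT t:{0..pi}|lborel. (if s \<le> t then N t * k t s else 0)))"
proof -
  have "(LINT t:{0..pi}|lborel. N t * (LINT s:{0..t}|lborel. k t s))
      = (LINT t:{0..pi}|lborel. (LINT s:{0..pi}|lborel. N t * (if s \<le> t then k t s else 0)))"
    by (intro set_lebesgue_integral_cong)
      (auto simp: set_lebesgue_integral_def integral_mult_right_zero[symmetric]
        intro!: Bochner_Integration.integral_cong split: split_indicator)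
  also have "\<dots> = (LINT s:{0..pi}|lborel. (LINT t:{0..pi}|lborel. N t * (if s \<le> t then k t s else 0)))"
  proof (rule set_integral_swap_bounded_kernel[OF N])
    show "(\<lambda>x. if snd x \<le> fst x then k (fst x) (snd x) else 0) \<in> borel_measurable (lborel \<Otimes>\<^sub>M lborel)"
      using k by measurable
    show "norm (if s \<le> t then k t s else 0) \<le> K" if "s \<in> {0..pi}" "t \<in> {0..pi}" for s t
      using le[OF that] order_trans[OF norm_ge_zero le[OF that]] by auto
  qed
  finally show ?thesis
    by (simp add: if_distrib[where f="\<lambda>x. N _ * x"] cong: if_cong)
qed

definition cos_kernel_adjoint :: "(real \<Rightarrow> complex) \<Rightarrow> complex \<Rightarrow> real \<Rightarrow> complex" where
  "cos_kernel_adjoint N c s = (LINT t:{0..pi}|lborel. (if s \<le> t then N t * cos_kernel c t s else 0))"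

lemma borel_measurable_cos_kernel_adjoint:
  assumes "L2_0pi N"
  shows "cos_kernel_adjoint N c \<in> borel_measurable lborel"
proof -
  define N' where "N' t = indicator {0..pi} t *\<^sub>R N t" for t
  have [measurable]: "N' \<in> borel_measurable lborel"
    using L2_0pi_borel_measurable[OF assms] unfolding N'_def .
  have "(\<lambda>(s, t). if s \<le> t then N' t * cos_kernel c t s else 0) \<in> borel_measurable (lborel \<Otimes>\<^sub>M lborel)"
    by measurable
  then have "(\<lambda>s. \<integral>t. (if s \<le> t then N' t * cos_kernel c t s else 0) \<partial>lborel) \<in> borel_measurable lborel"
    by (rule lborel.borel_measurable_lebesgue_integral)
  moreover have "cos_kernel_adjoint N c = (\<lambda>s. \<integral>t. (if s \<le> t then N' t * cos_kernel c t s else 0) \<partial>lborel)"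
    unfolding cos_kernel_adjoint_def set_lebesgue_integral_def N'_def
    by (intro ext Bochner_Integration.integral_cong) (auto split: split_indicator)
  ultimately show ?thesis
    by simp
qed

lemma norm_cos_kernel_adjoint_le:
  assumes N: "L2_0pi N" and s: "s \<in> {0..pi}"
  shows "norm (cos_kernel_adjoint N c s)
    \<le> pi * norm c * exp (2 * pi^2 * norm c) * (LINT t:{0..pi}|lborel. norm (N t))"
proof -
  have "cos_kernel_adjoint N c s = (LINT t:{0..pi}|lborel. N t * (if s \<le> t then cos_kernel c t s else 0))"
    unfolding cos_kernel_adjoint_def by (intro set_lebesgue_integral_cong) auto
  also have "norm \<dots> \<le> pi * norm c * exp (2 * pi^2 * norm c) * (LINT t:{0..pi}|lborel. norm (N t))"
  proof (rule norm_set_integral_L2_mult_le[OF N])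
    show "(\<lambda>t. if s \<le> t then cos_kernel c t s else 0) \<in> borel_measurable lborel"
      by measurable
    show "norm (if s \<le> t then cos_kernel c t s else 0) \<le> pi * norm c * exp (2 * pi^2 * norm c)"
      if "t \<in> {0..pi}" for t
      using cos_kernel_bounds(1)[of t pi s c "norm c"] s that by auto
  qed
  finally show ?thesis .
qed

lemma norm_cos_kernel_adjoint_diff_le:
  assumes N1: "L2_0pi N1" and N2: "L2_0pi N2" and s: "s \<in> {0..pi}"
    and c1: "norm c1 \<le> R" and c2: "norm c2 \<le> R"
  shows "norm (cos_kernel_adjoint N1 c1 s - cos_kernel_adjoint N2 c2 s)
    \<le> pi * R * exp (2 * pi^2 * R) * (sqrt pi * L2_norm_0pi (\<lambda>t. N1 t - N2 t))
      + pi * exp (2 * pi^2 * R) * norm (c1 - c2) * (sqrt pi * L2_norm_0pi N2)"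
proof -
  define k where "k c t = (if s \<le> t then cos_kernel c t s else 0)" for c t
  have R: "0 \<le> R"
    using order_trans[OF norm_ge_zero c1] .
  have k_meas: "k c \<in> borel_measurable lborel" for c
    unfolding k_def by measurable
  have k_le: "norm (k c t) \<le> pi * R * exp (2 * pi^2 * R)" if "norm c \<le> R" "t \<in> {0..pi}" for c t
    using cos_kernel_bounds(1)[OF _ _ that(1), of t pi s] s that(2) R by (auto simp: k_def)
  have k_diff_le: "norm (k c1 t - k c2 t) \<le> pi * exp (2 * pi^2 * R) * norm (c1 - c2)" if "t \<in> {0..pi}" for t
    using cos_kernel_bounds(2)[OF _ _ c1 c2, of t pi s] s that R by (auto simp: k_def)
  have int: "set_integrable lborel {0..pi} (\<lambda>t. N t * k c t)" if "L2_0pi N" "norm c \<le> R" for N c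
    using that k_le by (intro set_integrable_L2_mult_bounded[OF _ k_meas])
  have N12: "L2_0pi (\<lambda>t. N1 t - N2 t)"
    by (rule L2_0pi_diff[OF N1 N2])
  have adjoint: "cos_kernel_adjoint N c s = (LINT t:{0..pi}|lborel. N t * k c t)" for N c
    unfolding cos_kernel_adjoint_def k_def by (intro set_lebesgue_integral_cong) auto
  have "cos_kernel_adjoint N1 c1 s - cos_kernel_adjoint N2 c2 s
      = (LINT t:{0..pi}|lborel. N1 t * k c1 t - N2 t * k c2 t)"
    unfolding adjoint set_integral_diff(2)[OF int[OF N1 c1] int[OF N2 c2]] ..
  also have "\<dots> = (LINT t:{0..pi}|lborel. (N1 t - N2 t) * k c1 t + N2 t * (k c1 t - k c2 t))"
    by (simp add: algebra_simps)
  also have "\<dots> = (LINT t:{0..pi}|lborel. (N1 t - N2 t) * k c1 t) + (LINT t:{0..pi}|lborel. N2 t * (k c1 t - k c2 t))"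
    unfolding right_diff_distrib
    by (intro set_integral_add(2) int N12 c1 set_integral_diff(1) N2 c2)
  also have "norm \<dots> \<le> pi * R * exp (2 * pi^2 * R) * (LINT t:{0..pi}|lborel. norm (N1 t - N2 t))
      + pi * exp (2 * pi^2 * R) * norm (c1 - c2) * (LINT t:{0..pi}|lborel. norm (N2 t))"
    using k_meas k_le[OF c1] k_diff_le
    by (intro order_trans[OF norm_triangle_ineq] add_mono norm_set_integral_L2_mult_le N12 N2) auto
  also have "\<dots> \<le> pi * R * exp (2 * pi^2 * R) * (sqrt pi * L2_norm_0pi (\<lambda>t. N1 t - N2 t))
      + pi * exp (2 * pi^2 * R) * norm (c1 - c2) * (sqrt pi * L2_norm_0pi N2)"
    using R by (intro add_mono mult_left_mono set_integral_norm_le_L2_norm_0pi N12 N2) auto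
  finally show ?thesis .
qed

lemma set_integral_L2_cos_shift:
  fixes \<rho> \<mu> c :: complex
  assumes N: "L2_0pi N" and \<mu>: "\<mu>^2 = \<rho>^2 + c"
  shows "(LINT t:{0..pi}|lborel. N t * cos (\<mu> * of_real t))
    = (LINT t:{0..pi}|lborel. N t * cos (\<rho> * of_real t))
      + (LINT s:{0..pi}|lborel. cos_kernel_adjoint N c s * cos (\<rho> * of_real s))"
proof -
  have int: "set_integrable lborel {0..pi} (\<lambda>t. N t * cos (z * of_real t))" for z :: complex
    by (rule set_integrable_L2_mult_bounded[OF N _ norm_cos_of_real_le]) auto
  have "(LINT t:{0..pi}|lborel. N t * cos (\<mu> * of_real t)) - (LINT t:{0..pi}|lborel. N t * cos (\<rho> * of_real t))
      = (LINT t:{0..pi}|lborel. N t * (LINT s:{0..t}|lborel. cos_kernel c t s * cos (\<rho> * of_real s)))"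
    unfolding set_integral_diff(2)[OF int int, symmetric]
    by (intro set_lebesgue_integral_cong) (auto simp: cos_kernel_representation[OF _ \<mu>] right_diff_distrib)
  also have "\<dots> = (LINT s:{0..pi}|lborel. (LINT t:{0..pi}|lborel.
      (if s \<le> t then N t * (cos_kernel c t s * cos (\<rho> * of_real s)) else 0)))"
  proof (rule set_integral_triangle_swap[OF L2_0pi_set_integrable[OF N]])
    show "(\<lambda>x. cos_kernel c (fst x) (snd x) * cos (\<rho> * of_real (snd x))) \<in> borel_measurable (lborel \<Otimes>\<^sub>M lborel)"
      by measurable
    show "norm (cos_kernel c t s * cos (\<rho> * of_real s)) \<le> pi * norm c * exp (2 * pi^2 * norm c) * exp (norm \<rho> * pi)"
      if "s \<in> {0..pi}" "t \<in> {0..pi}" for s t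
      unfolding norm_mult using that
      by (intro mult_mono cos_kernel_bounds(1) norm_cos_of_real_le) auto
  qed
  also have "\<dots> = (LINT s:{0..pi}|lborel. cos_kernel_adjoint N c s * cos (\<rho> * of_real s))"
    unfolding cos_kernel_adjoint_def set_integral_mult_left[symmetric]
    by (intro set_lebesgue_integral_cong allI impI) (auto intro!: set_lebesgue_integral_cong)
  finally show ?thesis
    by (simp add: algebra_simps)
qed

section \<open>The shifted characteristic function\<close>

definition shifted_kernel :: "(real \<Rightarrow> complex) \<Rightarrow> complex \<Rightarrow> real \<Rightarrow> complex" where
  "shifted_kernel N \<omega> s = (let c = complex_of_real (2 / pi) * \<omega> in
     - xsin_kernel c pi s / of_real pi + \<omega> * cos_kernel c pi s + N s + cos_kernel_adjoint N c s)"

lemma set_integral_shifted_kernel_cos: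
  fixes \<omega> \<rho> :: complex
  assumes N: "L2_0pi N"
  defines "c \<equiv> complex_of_real (2 / pi) * \<omega>"
  shows "(LINT s:{0..pi}|lborel. shifted_kernel N \<omega> s * cos (\<rho> * of_real s))
    = - (LINT s:{0..pi}|lborel. xsin_kernel c pi s * cos (\<rho> * of_real s)) / of_real pi
      + \<omega> * (LINT s:{0..pi}|lborel. cos_kernel c pi s * cos (\<rho> * of_real s))
      + (LINT s:{0..pi}|lborel. N s * cos (\<rho> * of_real s))
      + (LINT s:{0..pi}|lborel. cos_kernel_adjoint N c s * cos (\<rho> * of_real s))"
proof -
  have bounded: "set_integrable lborel {0..pi} (\<lambda>s. f s * cos (\<rho> * of_real s))"
    if "f \<in> borel_measurable lborel" "\<And>s. s \<in> {0..pi} \<Longrightarrow> norm (f s) \<le> B" for f B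
    using that by (intro set_integrable_bounded_0pi[where B="B * exp (norm \<rho> * pi)"])
      (auto simp: norm_mult intro!: mult_mono norm_cos_of_real_le order_trans[OF norm_ge_zero that(2)])
  have "set_integrable lborel {0..pi} (\<lambda>s. xsin_kernel c pi s * cos (\<rho> * of_real s))"
    by (rule bounded[where B="pi * norm c * exp (2 * pi^2 * norm c)"]) (auto intro!: xsin_kernel_bounds(1))
  moreover have "set_integrable lborel {0..pi} (\<lambda>s. cos_kernel c pi s * cos (\<rho> * of_real s))"
    by (rule bounded[where B="pi * norm c * exp (2 * pi^2 * norm c)"]) (auto intro!: cos_kernel_bounds(1))
  moreover have "set_integrable lborel {0..pi} (\<lambda>s. N s * cos (\<rho> * of_real s))"
    by (rule set_integrable_L2_mult_bounded[OF N _ norm_cos_of_real_le]) auto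
  moreover have "set_integrable lborel {0..pi} (\<lambda>s. cos_kernel_adjoint N c s * cos (\<rho> * of_real s))"
    using borel_measurable_cos_kernel_adjoint[OF N] norm_cos_kernel_adjoint_le[OF N] by (rule bounded)
  moreover have "(LINT s:{0..pi}|lborel. shifted_kernel N \<omega> s * cos (\<rho> * of_real s))
      = (LINT s:{0..pi}|lborel. (- 1 / of_real pi) * (xsin_kernel c pi s * cos (\<rho> * of_real s))
        + \<omega> * (cos_kernel c pi s * cos (\<rho> * of_real s)) + N s * cos (\<rho> * of_real s)
        + cos_kernel_adjoint N c s * cos (\<rho> * of_real s))"
    unfolding shifted_kernel_def c_def Let_def by (intro set_lebesgue_integral_cong) (auto simp: algebra_simps)
  ultimately show ?thesis
    by (simp add: set_integral_add(1,2) set_integrable_mult_right)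
qed

theorem Delta_csqrt_shift:
  fixes \<omega> \<rho> :: complex
  assumes N: "L2_0pi N"
  shows "Delta N \<omega> (csqrt (\<rho>^2 + complex_of_real (2 / pi) * \<omega>))
    = - \<rho> * sin (\<rho> * pi) + (LINT t:{0..pi}|lborel. shifted_kernel N \<omega> t * cos (\<rho> * of_real t))"
proof -
  define c where "c = complex_of_real (2 / pi) * \<omega>"
  define \<mu> where "\<mu> = csqrt (\<rho>^2 + c)"
  define I where "I f = (LINT s:{0..pi}|lborel. f s * cos (\<rho> * of_real s))" for f
  have \<mu>: "\<mu>^2 = \<rho>^2 + c"
    by (simp add: \<mu>_def)
  have "\<mu> * sin (\<mu> * of_real pi)
      = \<rho> * sin (\<rho> * of_real pi) + \<omega> * cos (\<rho> * of_real pi) + I (xsin_kernel c pi) / of_real pi"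
    using xsin_kernel_representation[OF _ \<mu>, of pi] by (simp add: I_def c_def field_simps power2_eq_square)
  moreover have "cos (\<mu> * of_real pi) = cos (\<rho> * of_real pi) + I (cos_kernel c pi)"
    using cos_kernel_representation[OF _ \<mu>, of pi] by (simp add: I_def)
  moreover have "(LINT t:{0..pi}|lborel. N t * cos (\<mu> * of_real t)) = I N + I (cos_kernel_adjoint N c)"
    unfolding I_def by (rule set_integral_L2_cos_shift[OF N \<mu>])
  moreover have "I (shifted_kernel N \<omega>)
      = - I (xsin_kernel c pi) / of_real pi + \<omega> * I (cos_kernel c pi) + I N + I (cos_kernel_adjoint N c)"
    unfolding I_def c_def by (rule set_integral_shifted_kernel_cos[OF N])
  ultimately have "Delta N \<omega> \<mu> = - \<rho> * sin (\<rho> * pi) + I (shifted_kernel N \<omega>)"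
    unfolding Delta_def by (simp add: algebra_simps)
  then show ?thesis
    by (simp add: \<mu>_def c_def I_def)
qed

lemma L2_0pi_zero: "L2_0pi (\<lambda>_. 0)"
  by (simp add: L2_0pi_def set_borel_measurable_def set_integrable_def)

lemma L2_norm_0pi_zero: "L2_norm_0pi (\<lambda>_. 0) = 0"
  by (simp add: L2_norm_0pi_def)

lemma shifted_kernel_zero: "(\<And>t. N t = 0) \<Longrightarrow> shifted_kernel N 0 s = 0"
  by (simp add: shifted_kernel_def xsin_kernel_def cos_kernel_def kernel_series_def cos_kernel_adjoint_def
      cong: if_cong)

lemma set_borel_measurable_shifted_kernel:
  assumes N: "L2_0pi N"
  shows "set_borel_measurable lborel {0..pi} (shifted_kernel N \<omega>)"
proof -
  note [measurable] = L2_0pi_borel_measurable[OF N] borel_measurable_cos_kernel_adjoint[OF N]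
  define c where "c = complex_of_real (2 / pi) * \<omega>"
  have "(\<lambda>s. indicator {0..pi} s *\<^sub>R shifted_kernel N \<omega> s)
      = (\<lambda>s. indicator {0..pi} s *\<^sub>R (- xsin_kernel c pi s / of_real pi + \<omega> * cos_kernel c pi s
          + cos_kernel_adjoint N c s) + indicator {0..pi} s *\<^sub>R N s)"
    by (simp add: fun_eq_iff shifted_kernel_def c_def Let_def algebra_simps)
  also have "\<dots> \<in> borel_measurable lborel"
    by measurable
  finally show ?thesis
    unfolding set_borel_measurable_def .
qed

definition shift_const :: "real \<Rightarrow> real" where
  "shift_const W = exp (4 * pi * W) * (2 / pi + 4 * W + 2 * sqrt pi * W)"

lemma shift_const_nonneg: "0 \<le> W \<Longrightarrow> 0 \<le> shift_const W"
  by (simp add: shift_const_def)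

lemma norm_shifted_kernel_diff_le:
  fixes \<omega>1 \<omega>2 :: complex
  assumes N1: "L2_0pi N1" and N2: "L2_0pi N2" and N2_le: "L2_norm_0pi N2 \<le> W"
    and \<omega>1: "norm \<omega>1 \<le> W" and \<omega>2: "norm \<omega>2 \<le> W" and s: "s \<in> {0..pi}"
  shows "norm (shifted_kernel N1 \<omega>1 s - shifted_kernel N2 \<omega>2 s)
    \<le> norm (N1 s - N2 s) + shift_const W * (norm (\<omega>1 - \<omega>2) + L2_norm_0pi (\<lambda>t. N1 t - N2 t))"
proof -
  define R where "R = 2 / pi * W"
  define E where "E = exp (4 * pi * W)"
  define c1 where "c1 = complex_of_real (2 / pi) * \<omega>1"
  define c2 where "c2 = complex_of_real (2 / pi) * \<omega>2"
  define x where "x = norm (\<omega>1 - \<omega>2)"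
  define y where "y = L2_norm_0pi (\<lambda>t. N1 t - N2 t)"
  have W: "0 \<le> W"
    using order_trans[OF norm_ge_zero \<omega>1] .
  have "norm c1 = 2 / pi * norm \<omega>1" "norm c2 = 2 / pi * norm \<omega>2"
    unfolding c1_def c2_def norm_mult norm_of_real by simp_all
  then have c1: "norm c1 \<le> R" and c2: "norm c2 \<le> R"
    using \<omega>1 \<omega>2 by (simp_all add: R_def divide_right_mono)
  have c12: "norm (c1 - c2) = 2 / pi * x"
    unfolding c1_def c2_def x_def right_diff_distrib[symmetric] norm_mult norm_of_real by simp
  have bound: "pi * R * exp (2 * pi^2 * R) = 2 * W * E" and lip: "pi * exp (2 * pi^2 * R) * (2 / pi) = 2 * E"
    by (simp_all add: R_def E_def power2_eq_square)
  have s': "\<bar>s\<bar> \<le> pi" "\<bar>pi\<bar> \<le> pi"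
    using s by auto
  have lip_x: "pi * exp (2 * pi^2 * R) * norm (c1 - c2) = 2 * E * x"
    unfolding c12 lip[symmetric] by (simp add: mult_ac)
  have xsin: "norm (xsin_kernel c1 pi s - xsin_kernel c2 pi s) \<le> 2 * E * x"
    using xsin_kernel_bounds(2)[OF s'(2,1) c1 c2] unfolding lip_x .
  have cos: "norm (\<omega>1 * cos_kernel c1 pi s - \<omega>2 * cos_kernel c2 pi s) \<le> 4 * W * E * x"
    using norm_mult_cos_kernel_diff_le[OF s'(2,1) c1 c2 \<omega>1, of \<omega>2] unfolding bound lip_x
    by (simp add: x_def algebra_simps)
  have adjoint: "norm (cos_kernel_adjoint N1 c1 s - cos_kernel_adjoint N2 c2 s)
      \<le> 2 * W * E * (sqrt pi * y) + 2 * E * x * (sqrt pi * W)"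
  proof -
    have "2 * E * x * (sqrt pi * L2_norm_0pi N2) \<le> 2 * E * x * (sqrt pi * W)"
      using N2_le by (intro mult_left_mono) (auto simp: E_def x_def)
    then show ?thesis
      using norm_cos_kernel_adjoint_diff_le[OF N1 N2 s c1 c2] unfolding bound lip_x y_def by linarith
  qed
  have "shifted_kernel N1 \<omega>1 s - shifted_kernel N2 \<omega>2 s
      = - (xsin_kernel c1 pi s - xsin_kernel c2 pi s) / of_real pi
        + (\<omega>1 * cos_kernel c1 pi s - \<omega>2 * cos_kernel c2 pi s) + (N1 s - N2 s)
        + (cos_kernel_adjoint N1 c1 s - cos_kernel_adjoint N2 c2 s)"
    by (simp add: shifted_kernel_def c1_def c2_def Let_def algebra_simps diff_divide_distrib)
  also have "norm \<dots> \<le> 2 * E * x / pi + 4 * W * E * x + norm (N1 s - N2 s)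
      + (2 * W * E * sqrt pi * y + 2 * E * x * sqrt pi * W)"
    using xsin cos adjoint
    by (intro order_trans[OF norm_triangle_ineq] add_mono order_trans[OF norm_triangle_ineq])
      (auto simp: norm_divide norm_minus_commute divide_right_mono)
  also have "\<dots> \<le> 2 * E * x / pi + 4 * W * E * x + norm (N1 s - N2 s)
      + (2 * W * E * (sqrt pi * y) + 2 * E * x * (sqrt pi * W)) + (2 * E * y / pi + 4 * W * E * y)"
    using W L2_norm_0pi_nonneg[of "\<lambda>t. N1 t - N2 t"] by (simp add: E_def y_def)
  also have "\<dots> = norm (N1 s - N2 s) + E * (2 / pi + 4 * W + 2 * sqrt pi * W) * (x + y)"
    by (simp add: field_simps)
  finally show ?thesis
    by (simp add: shift_const_def E_def x_def y_def)
qed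

lemma shifted_kernel_L2_lipschitz:
  fixes \<omega>1 \<omega>2 :: complex
  assumes N1: "L2_0pi N1" and N2: "L2_0pi N2" and bounds: "L2_norm_0pi N2 \<le> W" "norm \<omega>1 \<le> W" "norm \<omega>2 \<le> W"
  shows "L2_0pi (\<lambda>s. shifted_kernel N1 \<omega>1 s - shifted_kernel N2 \<omega>2 s)"
    and "L2_norm_0pi (\<lambda>s. shifted_kernel N1 \<omega>1 s - shifted_kernel N2 \<omega>2 s)
      \<le> sqrt 2 * (1 + sqrt pi * shift_const W) * (L2_norm_0pi (\<lambda>t. N1 t - N2 t) + norm (\<omega>1 - \<omega>2))"
proof -
  define x where "x = norm (\<omega>1 - \<omega>2)"
  define y where "y = L2_norm_0pi (\<lambda>t. N1 t - N2 t)"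
  define K where "K = shift_const W"
  have K: "0 \<le> K" and xy: "0 \<le> x" "0 \<le> y"
    using order_trans[OF norm_ge_zero bounds(2)]
    by (simp_all add: K_def shift_const_nonneg x_def y_def L2_norm_0pi_nonneg)
  have meas: "set_borel_measurable lborel {0..pi} (\<lambda>s. shifted_kernel N1 \<omega>1 s - shifted_kernel N2 \<omega>2 s)"
    using set_borel_measurable_shifted_kernel[OF N1, of \<omega>1] set_borel_measurable_shifted_kernel[OF N2, of \<omega>2]
    unfolding set_borel_measurable_def by (simp add: scaleR_diff_right)
  have "norm (shifted_kernel N1 \<omega>1 s - shifted_kernel N2 \<omega>2 s) \<le> norm (N1 s - N2 s) + K * (x + y)"
    if "s \<in> {0..pi}" for s
    using norm_shifted_kernel_diff_le[OF N1 N2 bounds that] by (simp add: K_def x_def y_def)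
  note pointwise = L2_norm_0pi_le_pointwise[OF L2_0pi_diff[OF N1 N2] meas mult_nonneg_nonneg[OF K] this]
  show "L2_0pi (\<lambda>s. shifted_kernel N1 \<omega>1 s - shifted_kernel N2 \<omega>2 s)"
    using pointwise(1) xy by simp
  have "L2_norm_0pi (\<lambda>s. shifted_kernel N1 \<omega>1 s - shifted_kernel N2 \<omega>2 s) \<le> sqrt 2 * (y + sqrt pi * (K * (x + y)))"
    using pointwise(2) xy unfolding y_def by simp
  also have "\<dots> \<le> sqrt 2 * (1 + sqrt pi * K) * (y + x)"
    using K xy by (simp add: algebra_simps)
  finally show "L2_norm_0pi (\<lambda>s. shifted_kernel N1 \<omega>1 s - shifted_kernel N2 \<omega>2 s)
      \<le> sqrt 2 * (1 + sqrt pi * shift_const W) * (L2_norm_0pi (\<lambda>t. N1 t - N2 t) + norm (\<omega>1 - \<omega>2))"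
    by (simp add: K_def x_def y_def add.commute)
qed

lemma shifted_kernel_L2_bounded:
  assumes N: "L2_0pi N" and bounds: "L2_norm_0pi N \<le> W" "norm \<omega> \<le> W"
  shows "L2_0pi (shifted_kernel N \<omega>)"
    and "L2_norm_0pi (shifted_kernel N \<omega>) \<le> sqrt 2 * (1 + sqrt pi * shift_const W) * (2 * W)"
proof -
  have W: "0 \<le> W"
    using order_trans[OF norm_ge_zero bounds(2)] .
  have K: "0 \<le> shift_const W * (2 * W)"
    using W by (simp add: shift_const_nonneg)
  have meas: "set_borel_measurable lborel {0..pi} (shifted_kernel N \<omega>)"
    by (rule set_borel_measurable_shifted_kernel[OF N])
  have "L2_norm_0pi (\<lambda>t. N t - 0) = L2_norm_0pi N"
    unfolding L2_norm_0pi_def by simp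
  then have "norm (shifted_kernel N \<omega> s) \<le> norm (N s) + shift_const W * (2 * W)" if "s \<in> {0..pi}" for s
    using norm_shifted_kernel_diff_le[OF N L2_0pi_zero _ bounds(2) _ that, of 0] bounds W
      mult_left_mono[of "norm \<omega> + L2_norm_0pi N" "2 * W" "shift_const W"]
    by (simp add: shifted_kernel_zero L2_norm_0pi_zero shift_const_nonneg)
  note pointwise = L2_norm_0pi_le_pointwise[OF N meas K this]
  show "L2_0pi (shifted_kernel N \<omega>)"
    by (rule pointwise(1))
  have "L2_norm_0pi (shifted_kernel N \<omega>) \<le> sqrt 2 * (W + sqrt pi * (shift_const W * (2 * W)))"
    using bounds(1) by (intro order_trans[OF pointwise(2)] mult_left_mono add_right_mono) auto
  also have "\<dots> \<le> sqrt 2 * (1 + sqrt pi * shift_const W) * (2 * W)"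
    using W by (simp add: algebra_simps)
  finally show "L2_norm_0pi (shifted_kernel N \<omega>) \<le> sqrt 2 * (1 + sqrt pi * shift_const W) * (2 * W)" .
qed

theorem lemma10p2:
  fixes W :: real
  assumes "W > 0"
  shows "\<exists>C::real. \<forall>(N1::real \<Rightarrow> complex) (N2::real \<Rightarrow> complex) (\<omega>1::complex) (\<omega>2::complex).
     L2_0pi N1 \<and> L2_0pi N2 \<and>
     L2_norm_0pi N1 + cmod \<omega>1 \<le> W \<and> L2_norm_0pi N2 + cmod \<omega>2 \<le> W \<longrightarrow>
     (\<exists>(M1::real \<Rightarrow> complex) (M2::real \<Rightarrow> complex).
        L2_0pi M1 \<and> L2_0pi M2 \<and>
        (\<forall>\<rho>::complex. Delta N1 \<omega>1 (csqrt (\<rho>\<^sup>2 + 2 / pi * \<omega>1))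
            = - \<rho> * sin (\<rho> * pi) + (LINT t:{0..pi}|lborel. M1 t * cos (\<rho> * of_real t))) \<and>
        (\<forall>\<rho>::complex. Delta N2 \<omega>2 (csqrt (\<rho>\<^sup>2 + 2 / pi * \<omega>2))
            = - \<rho> * sin (\<rho> * pi) + (LINT t:{0..pi}|lborel. M2 t * cos (\<rho> * of_real t))) \<and>
        L2_norm_0pi M1 \<le> C \<and> L2_norm_0pi M2 \<le> C \<and>
        L2_norm_0pi (\<lambda>t. M1 t - M2 t)
          \<le> C * (L2_norm_0pi (\<lambda>t. N1 t - N2 t) + cmod (\<omega>1 - \<omega>2)))"
proof -
  define c where "c = sqrt 2 * (1 + sqrt pi * shift_const W)"
  have "0 \<le> c"
    using assms by (simp add: c_def shift_const_nonneg)
  then have c: "c * (2 * W) \<le> c * (1 + 2 * W)" "c * 1 \<le> c * (1 + 2 * W)"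
    using assms by (intro mult_left_mono; simp)+
  show ?thesis
  proof (intro exI[of _ "c * (1 + 2 * W)"] allI impI, elim conjE,
      rule_tac x="shifted_kernel N1 \<omega>1" in exI, rule_tac x="shifted_kernel N2 \<omega>2" in exI, intro conjI allI)
    fix N1 N2 :: "real \<Rightarrow> complex" and \<omega>1 \<omega>2 :: complex
    assume N1: "L2_0pi N1" and N2: "L2_0pi N2"
      and W1: "L2_norm_0pi N1 + cmod \<omega>1 \<le> W" and W2: "L2_norm_0pi N2 + cmod \<omega>2 \<le> W"
    have bounds: "L2_norm_0pi N1 \<le> W" "norm \<omega>1 \<le> W" "L2_norm_0pi N2 \<le> W" "norm \<omega>2 \<le> W"
      using W1 W2 L2_norm_0pi_nonneg[of N1] L2_norm_0pi_nonneg[of N2] norm_ge_zero[of \<omega>1] norm_ge_zero[of \<omega>2]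
      by linarith+
    note M1 = shifted_kernel_L2_bounded[OF N1 bounds(1,2), folded c_def]
      and M2 = shifted_kernel_L2_bounded[OF N2 bounds(3,4), folded c_def]
    show "L2_0pi (shifted_kernel N1 \<omega>1)" "L2_0pi (shifted_kernel N2 \<omega>2)"
      using M1(1) M2(1) .
    show "L2_norm_0pi (shifted_kernel N1 \<omega>1) \<le> c * (1 + 2 * W)" "L2_norm_0pi (shifted_kernel N2 \<omega>2) \<le> c * (1 + 2 * W)"
      using M1(2) M2(2) c(1) by linarith+
    show "Delta N1 \<omega>1 (csqrt (\<rho>\<^sup>2 + 2 / pi * \<omega>1))
        = - \<rho> * sin (\<rho> * pi) + (LINT t:{0..pi}|lborel. shifted_kernel N1 \<omega>1 t * cos (\<rho> * of_real t))"
      "Delta N2 \<omega>2 (csqrt (\<rho>\<^sup>2 + 2 / pi * \<omega>2))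
        = - \<rho> * sin (\<rho> * pi) + (LINT t:{0..pi}|lborel. shifted_kernel N2 \<omega>2 t * cos (\<rho> * of_real t))"
      for \<rho> :: complex
      using Delta_csqrt_shift[OF N1] Delta_csqrt_shift[OF N2] by simp_all
    have "0 \<le> L2_norm_0pi (\<lambda>t. N1 t - N2 t) + cmod (\<omega>1 - \<omega>2)"
      by (simp add: L2_norm_0pi_nonneg)
    then show "L2_norm_0pi (\<lambda>t. shifted_kernel N1 \<omega>1 t - shifted_kernel N2 \<omega>2 t)
        \<le> c * (1 + 2 * W) * (L2_norm_0pi (\<lambda>t. N1 t - N2 t) + cmod (\<omega>1 - \<omega>2))"
      using shifted_kernel_L2_lipschitz(2)[OF N1 N2 bounds(3,2,4), folded c_def]
      by (intro order_trans[OF _ mult_right_mono[OF c(2)[unfolded mult_1_right]]])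
  qed
qed

end
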